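(* Let $E$ be a sequentially complete locally convex space, $A$ a closed linear operator on $E$, $0<\tau\le\infty$ and $n\in\mathbb N_0$. (i) Suppose that for every $x\in D(A^n)$ the abstract Cauchy problem $(ACP_1)$ has a unique mild solution $u(\cdot;x)$ on $[0,\tau)$. Then $A$ is stationary dense and $n(A)\le n$. (ii) Suppose that $A$ generates a locally equicontinuous $n$-times integrated semigroup $(S_n(t))_{t\in[0,\tau)}$ on $E$. Then $A$ is stationary dense and $n(A)\le n$.
   Context: $E$ is a Hausdorff sequentially complete locally convex space whose topology is given by a family $\circledast$ of continuous seminorms. For a closed linear operator $A$ on $E$, $D(A^m)$ denotes the domain of the $m$-th power of $A$. $A$ is called stationary dense if $$n(A):=\inf\{k\in\mathbb N_0:\ D(A^m)\subseteq\overline{D(A^{m+1})}\ \text{for all } m\ge k\}<\infty .$$ The abstract Cauchy problem $(ACP_1)$ is: find $u\in C([0,\tau):[D(A)])\cap C^1([0,\tau):E)$ with $u'(t)=Au(t)$ for $t\in[0,\tau)$ and $u(0)=x$. A mild solution of $(ACP_1)$ is a continuous function $u(\cdot;x):[0,\tau)\to E$ such that $\int_0^t u(s;x)\,ds\in D(A)$ and $A\int_0^t u(s;x)\,ds=u(t;x)-x$ for all $t\in[0,\tau)$. A locally equicontinuous $n$-times integrated semigroup generated by $A$ is a strongly continuous family $(S_n(t))_{t\in[0,\tau)}$ of continuous linear operators on $E$, equicontinuous on every compact subinterval of $[0,\tau)$, with $S_n(t)A\subseteq AS_n(t)$, such that for all $x\in E$ and $t\in[0,\tau)$, $\int_0^tS_n(s)x\,ds\in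 D(A)$ and $A\int_0^tS_n(s)x\,ds=S_n(t)x-\frac{t^n}{n!}x$, and $A$ is the (integral) generator of this family. *)

theory Defs
  imports "HOL-Analysis.Analysis"
begin

definition seminorm :: "('a::real_vector \<Rightarrow> real) \<Rightarrow> bool" where
  "seminorm p \<longleftrightarrow> (\<forall>x y. p (x + y) \<le> p x + p y) \<and> (\<forall>c x. p (c *\<^sub>R x) = \<bar>c\<bar> * p x)"

definition lcs_top :: "('a::real_vector \<Rightarrow> real) set \<Rightarrow> 'a topology" where
  "lcs_top P = topology_generated_by
     (insert UNIV {{y. p (y - x) < e} | p x e. p \<in> P \<and> e > 0})"

definition seq_complete_lcs :: "('a::real_vector \<Rightarrow> real) set \<Rightarrow> bool" where
  "seq_complete_lcs P \<longleftrightarrow>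
     (\<forall>xs::nat \<Rightarrow> 'a. (\<forall>p\<in>P. \<forall>e>0. \<exists>N. \<forall>m\<ge>N. \<forall>k\<ge>N. p (xs m - xs k) < e)
        \<longrightarrow> (\<exists>x. limitin (lcs_top P) xs x sequentially))"

definition sc_lcs :: "('a::real_vector \<Rightarrow> real) set \<Rightarrow> bool" where
  "sc_lcs P \<longleftrightarrow> (\<forall>p\<in>P. seminorm p) \<and> Hausdorff_space (lcs_top P) \<and> seq_complete_lcs P"

definition has_lcs_integral ::
  "('a::real_vector \<Rightarrow> real) set \<Rightarrow> (real \<Rightarrow> 'a) \<Rightarrow> real \<Rightarrow> real \<Rightarrow> 'a \<Rightarrow> bool" where
  "has_lcs_integral P f a b I \<longleftrightarrow>
     (\<forall>p\<in>P. \<forall>e>0. \<exists>d>0. \<forall>D. D tagged_division_of {a..b} \<and> (\<lambda>x. ball x d) fine D \<longrightarrow>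
        p ((\<Sum>(x,K)\<in>D. Henstock_Kurzweil_Integration.content K *\<^sub>R f x) - I) < e)"

definition closed_linear_op :: "('a::real_vector \<Rightarrow> real) set \<Rightarrow> 'a set \<Rightarrow> ('a \<Rightarrow> 'a) \<Rightarrow> bool" where
  "closed_linear_op P D A \<longleftrightarrow> subspace D
     \<and> (\<forall>x\<in>D. \<forall>y\<in>D. A (x + y) = A x + A y)
     \<and> (\<forall>c. \<forall>x\<in>D. A (c *\<^sub>R x) = c *\<^sub>R A x)
     \<and> closedin (prod_topology (lcs_top P) (lcs_top P)) {(x, A x) | x. x \<in> D}"

fun dom_pow :: "'a set \<Rightarrow> ('a \<Rightarrow> 'a) \<Rightarrow> nat \<Rightarrow> 'a set" where
  "dom_pow D A 0 = UNIV"
| "dom_pow D A (Suc m) = {x \<in> D. A x \<in> dom_pow D A m}"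

definition sd_indices :: "('a::real_vector \<Rightarrow> real) set \<Rightarrow> 'a set \<Rightarrow> ('a \<Rightarrow> 'a) \<Rightarrow> nat set" where
  "sd_indices P D A = {k. \<forall>m\<ge>k. dom_pow D A m \<subseteq> (lcs_top P) closure_of (dom_pow D A (Suc m))}"

definition stationary_dense :: "('a::real_vector \<Rightarrow> real) set \<Rightarrow> 'a set \<Rightarrow> ('a \<Rightarrow> 'a) \<Rightarrow> bool" where
  "stationary_dense P D A \<longleftrightarrow> sd_indices P D A \<noteq> {}"

text \<open>n(A) (meaningful when A is stationary dense)\<close>
definition n_index :: "('a::real_vector \<Rightarrow> real) set \<Rightarrow> 'a set \<Rightarrow> ('a \<Rightarrow> 'a) \<Rightarrow> nat" where
  "n_index P D A = Inf (sd_indices P D A)"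

definition Tint :: "ereal \<Rightarrow> real set" where
  "Tint \<tau> = {t. 0 \<le> t \<and> ereal t < \<tau>}"

definition mild_solution ::
  "('a::real_vector \<Rightarrow> real) set \<Rightarrow> 'a set \<Rightarrow> ('a \<Rightarrow> 'a) \<Rightarrow> ereal \<Rightarrow> 'a \<Rightarrow> (real \<Rightarrow> 'a) \<Rightarrow> bool" where
  "mild_solution P D A \<tau> x u \<longleftrightarrow>
     continuous_map (subtopology euclideanreal (Tint \<tau>)) (lcs_top P) u
     \<and> (\<forall>t\<in>Tint \<tau>. \<exists>I. has_lcs_integral P u 0 t I \<and> I \<in> D \<and> A I = u t - x)"

definition unique_mild_solution ::
  "('a::real_vector \<Rightarrow> real) set \<Rightarrow> 'a set \<Rightarrow> ('a \<Rightarrow> 'a) \<Rightarrow> ereal \<Rightarrow> 'a \<Rightarrow> bool" where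
  "unique_mild_solution P D A \<tau> x \<longleftrightarrow>
     (\<exists>u. mild_solution P D A \<tau> x u \<and>
        (\<forall>v. mild_solution P D A \<tau> x v \<longrightarrow> (\<forall>t\<in>Tint \<tau>. v t = u t)))"

definition loc_equicont_int_semigroup ::
  "('a::real_vector \<Rightarrow> real) set \<Rightarrow> 'a set \<Rightarrow> ('a \<Rightarrow> 'a) \<Rightarrow> ereal \<Rightarrow> nat \<Rightarrow> (real \<Rightarrow> 'a \<Rightarrow> 'a) \<Rightarrow> bool" where
  "loc_equicont_int_semigroup P D A \<tau> n S \<longleftrightarrow>
     \<comment> \<open>continuous linear operators\<close>
     (\<forall>t\<in>Tint \<tau>. linear (S t) \<and> continuous_map (lcs_top P) (lcs_top P) (S t))
     \<comment> \<open>strong continuity\<close>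
     \<and> (\<forall>x. continuous_map (subtopology euclideanreal (Tint \<tau>)) (lcs_top P) (\<lambda>t. S t x))
     \<comment> \<open>equicontinuity on compact subintervals [0,b]\<close>
     \<and> (\<forall>b\<in>Tint \<tau>. \<forall>V. openin (lcs_top P) V \<and> 0 \<in> V \<longrightarrow>
          (\<exists>U. openin (lcs_top P) U \<and> 0 \<in> U \<and> (\<forall>t\<in>{0..b}. S t ` U \<subseteq> V)))
     \<comment> \<open>S(t) A \<subseteq> A S(t)\<close>
     \<and> (\<forall>t\<in>Tint \<tau>. \<forall>x\<in>D. S t x \<in> D \<and> A (S t x) = S t (A x))
     \<comment> \<open>integral equation\<close>
     \<and> (\<forall>t\<in>Tint \<tau>. \<forall>x. \<exists>I. has_lcs_integral P (\<lambda>s. S s x) 0 t I \<and> I \<in> D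
          \<and> A I = S t x - (t ^ n / fact n) *\<^sub>R x)
     \<comment> \<open>A is the integral generator of S\<close>
     \<and> (\<forall>x y. (x \<in> D \<and> y = A x) \<longleftrightarrow>
          (\<forall>t\<in>Tint \<tau>. has_lcs_integral P (\<lambda>s. S s y) 0 t (S t x - (t ^ n / fact n) *\<^sub>R x)))"

end

theory Submission
  imports Defs
begin

text \<open>Fix \<open>m \<ge> n\<close> and \<open>x \<in> D(A\<^sup>m)\<close>. Both hypotheses produce a family \<open>K(t) \<in> D(A\<^sup>m\<^sup>+\<^sup>1)\<close> with
  \<open>K(t) = t\<^sup>n\<^sup>+\<^sup>1/(n+1)! x + o(t\<^sup>n\<^sup>+\<^sup>1)\<close> as \<open>t \<longrightarrow> 0+\<close>, so that \<open>x\<close> is the limit of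
  \<open>(n+1)!/t\<^sup>n\<^sup>+\<^sup>1 K(t) \<in> D(A\<^sup>m\<^sup>+\<^sup>1)\<close>.
  For an integrated semigroup take \<open>K(t) = \<integral>\<^sub>0\<^sup>t S(s) x ds\<close>: then \<open>A K(t) = S(t) x - t\<^sup>n/n! x \<in> D(A\<^sup>m)\<close>,
  and \<open>S(s) x = s\<^sup>n/n! x + o(s\<^sup>n)\<close> for \<open>x \<in> D(A\<^sup>n)\<close> by induction on the power of \<open>A\<close>.
  For unique mild solutions, \<open>x + \<integral>\<^sub>0\<^sup>t u(s; A x) ds\<close> is a mild solution with initial value \<open>x\<close>,
  so by uniqueness \<open>u(t; x) \<in> D(A\<^sup>m\<^sup>-\<^sup>n)\<close>; take for \<open>K\<close> the \<open>(n+1)\<close>-fold iterated integral of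
  \<open>u(\<cdot>; x)\<close>, each integration gaining one power of \<open>A\<close> and one order in \<open>t\<close>.\<close>

hide_const (open) Polynomial.content

lemma seminorm_scaleR: "seminorm p \<Longrightarrow> p (c *\<^sub>R x) = \<bar>c\<bar> * p x"
  unfolding seminorm_def by blast

lemma seminorm_add: "seminorm p \<Longrightarrow> p (x + y) \<le> p x + p y"
  unfolding seminorm_def by blast

lemma seminorm_zero: "seminorm p \<Longrightarrow> p 0 = 0"
  using seminorm_scaleR[of p 0 0] by simp

lemma seminorm_minus: "seminorm p \<Longrightarrow> p (- x) = p x"
  using seminorm_scaleR[of p "-1" x] by simp

lemma seminorm_nonneg: "seminorm p \<Longrightarrow> 0 \<le> p x"
  using seminorm_add[of p x "- x"] seminorm_zero[of p] seminorm_minus[of p x] by simp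

lemma seminorm_diff: "seminorm p \<Longrightarrow> p (x - y) \<le> p x + p y"
  using seminorm_add[of p x "- y"] seminorm_minus[of p y] by simp

lemma seminorm_diff_commute: "seminorm p \<Longrightarrow> p (x - y) = p (y - x)"
  using seminorm_minus[of p "x - y"] by simp

lemma seminorm_triangle: "seminorm p \<Longrightarrow> p (x - z) \<le> p (x - y) + p (y - z)"
  using seminorm_add[of p "x - y" "y - z"] by simp

lemma seminorm_sum: "seminorm p \<Longrightarrow> p (sum f S) \<le> (\<Sum>i\<in>S. p (f i))"
proof (induction S rule: infinite_finite_induct)
  case (insert x F)
  then show ?case using seminorm_add[OF insert(4), of "f x" "sum f F"] by simp
qed (simp_all add: seminorm_zero)

lemma sc_lcs_seminorm: "sc_lcs P \<Longrightarrow> p \<in> P \<Longrightarrow> seminorm p"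
  unfolding sc_lcs_def by blast

lemma topspace_lcs_top [simp]: "topspace (lcs_top P) = UNIV"
  unfolding lcs_top_def by auto

lemma openin_lcs_top_ball:
  assumes "p \<in> P" "e > 0"
  shows "openin (lcs_top P) {y. p (y - x) < e}"
  unfolding lcs_top_def by (rule topology_generated_by_Basis) (use assms in blast)

lemma limitin_lcs_topD:
  assumes "limitin (lcs_top P) f l F" "seminorm p" "p \<in> P" "e > 0"
  shows "eventually (\<lambda>k. p (f k - l) < e) F"
  using assms openin_lcs_top_ball[of p P e l] seminorm_zero[of p]
  unfolding limitin_def by auto

lemma limitin_lcs_topI:
  assumes sn: "\<forall>p\<in>P. seminorm p"
    and lim: "\<And>p e. p \<in> P \<Longrightarrow> e > 0 \<Longrightarrow> eventually (\<lambda>k. p (f k - l) < e) F"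
  shows "limitin (lcs_top P) f l F"
proof -
  have "eventually (\<lambda>k. f k \<in> U) F"
    if "generate_topology_on (insert UNIV {{y. p (y - x) < e} | p x e. p \<in> P \<and> e > 0}) U"
      and "l \<in> U" for U
    using that
  proof (induction rule: generate_topology_on.induct)
    case (Int a b) then show ?case by (auto intro: eventually_conj)
  next
    case (UN K)
    then obtain k where "k \<in> K" "l \<in> k" by blast
    with UN have "eventually (\<lambda>x. f x \<in> k) F" by blast
    then show ?case by (rule eventually_mono) (use \<open>k \<in> K\<close> in blast)
  next
    case (Basis s)
    show ?case
    proof (cases "s = UNIV")
      case False
      with Basis obtain p x e where s: "s = {y. p (y - x) < e}" "p \<in> P" "e > 0" by blast
      with Basis have "eventually (\<lambda>k. p (f k - l) < e - p (l - x)) F"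
        by (intro lim) auto
      then show ?thesis
      proof (rule eventually_mono)
        fix k assume "p (f k - l) < e - p (l - x)"
        then show "f k \<in> s" using seminorm_triangle[of p "f k" x l] sn s by auto
      qed
    qed simp
  qed simp
  then show ?thesis
    unfolding limitin_def topspace_lcs_top unfolding lcs_top_def openin_topology_generated_by_iff
    by blast
qed

lemma sc_lcs_eqI:
  assumes sc: "sc_lcs P" and small: "\<And>p e. p \<in> P \<Longrightarrow> e > 0 \<Longrightarrow> p (a - b) < e"
  shows "a = b"
proof -
  have sn: "\<forall>p\<in>P. seminorm p" using sc unfolding sc_lcs_def by blast
  have "limitin (lcs_top P) (\<lambda>k::nat. a) a sequentially"
    by (rule limitin_lcs_topI[OF sn]) (simp add: sn seminorm_zero)
  moreover have "limitin (lcs_top P) (\<lambda>k::nat. a) b sequentially"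
    by (rule limitin_lcs_topI[OF sn]) (simp add: small)
  moreover have "Hausdorff_space (lcs_top P)" using sc unfolding sc_lcs_def by blast
  ultimately show ?thesis using limitin_Hausdorff_unique[of "lcs_top P" "\<lambda>k::nat. a" a sequentially b]
    by simp
qed

lemma continuous_map_lcs_topD:
  assumes c: "continuous_map (subtopology euclideanreal T) (lcs_top P) u"
    and "seminorm p" "p \<in> P" "s \<in> T" "e > 0"
  shows "\<exists>d>0. \<forall>s'\<in>T. \<bar>s' - s\<bar> < d \<longrightarrow> p (u s' - u s) < e"
proof -
  have "openin (subtopology euclideanreal T)
      {x \<in> topspace (subtopology euclideanreal T). u x \<in> {y. p (y - u s) < e}}"
    using c openin_lcs_top_ball[OF assms(3,5)] unfolding continuous_map_def by blast
  then have "openin (subtopology euclideanreal T) {x \<in> T. p (u x - u s) < e}" by simp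
  then obtain V where V: "open V" "{x \<in> T. p (u x - u s) < e} = T \<inter> V"
    by (meson openin_open)
  have "s \<in> {x \<in> T. p (u x - u s) < e}" using assms(2,4,5) seminorm_zero[of p] by simp
  then have "s \<in> V" using V(2) by blast
  then obtain d where "d > 0" "ball s d \<subseteq> V" using V(1) open_contains_ball by blast
  moreover have "p (u s' - u s) < e" if "s' \<in> T" "\<bar>s' - s\<bar> < d" for s'
  proof -
    have "s' \<in> ball s d" using that by (simp add: dist_real_def)
    then show ?thesis using \<open>ball s d \<subseteq> V\<close> V(2) that(1) by blast
  qed
  ultimately show ?thesis by blast
qed

lemma continuous_map_lcs_topI:
  assumes sn: "\<forall>p\<in>P. seminorm p"
    and cont: "\<And>s p e. s \<in> T \<Longrightarrow> p \<in> P \<Longrightarrow> e > 0 \<Longrightarrow>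
                 \<exists>d>0. \<forall>s'\<in>T. \<bar>s' - s\<bar> < d \<longrightarrow> p (g s' - g s) < e"
  shows "continuous_map (subtopology euclideanreal T) (lcs_top P) g"
  unfolding lcs_top_def continuous_on_generated_topo_iff
proof (intro conjI allI impI)
  fix U assume U: "U \<in> insert UNIV {{y. p (y - x) < e} |p x e. p \<in> P \<and> 0 < e}"
  show "openin (top_of_set T) (g -` U \<inter> topspace (top_of_set T))"
  proof (cases "U = UNIV")
    case False
    then obtain p c e where U': "U = {y. p (y - c) < e}" "p \<in> P" "e > 0" using U by blast
    show ?thesis unfolding openin_euclidean_subtopology_iff
    proof (intro conjI ballI)
      fix s assume s: "s \<in> g -` U \<inter> topspace (top_of_set T)"
      then have "s \<in> T" "p (g s - c) < e" using U'(1) by auto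
      then obtain d where "d > 0" and d: "\<forall>s'\<in>T. \<bar>s' - s\<bar> < d \<longrightarrow> p (g s' - g s) < e - p (g s - c)"
        using cont[OF _ U'(2), of s "e - p (g s - c)"] by auto
      show "\<exists>d>0. \<forall>x'\<in>T. dist x' s < d \<longrightarrow> x' \<in> g -` U \<inter> topspace (top_of_set T)"
      proof (intro exI[of _ d] conjI ballI impI)
        fix x' assume x': "x' \<in> T" "dist x' s < d"
        then have "p (g x' - g s) < e - p (g s - c)" using d by (simp add: dist_real_def)
        moreover have "p (g x' - c) \<le> p (g x' - g s) + p (g s - c)"
          by (rule seminorm_triangle) (use sn U'(2) in blast)
        ultimately show "x' \<in> g -` U \<inter> topspace (top_of_set T)" using x' U'(1) by simp
      qed (rule \<open>d > 0\<close>)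
    qed simp
  qed simp
qed simp

lemma continuous_map_lcs_top_add_const:
  assumes sn: "\<forall>p\<in>P. seminorm p"
    and c: "continuous_map (subtopology euclideanreal T) (lcs_top P) f"
  shows "continuous_map (subtopology euclideanreal T) (lcs_top P) (\<lambda>t. y + f t)"
proof (rule continuous_map_lcs_topI[OF sn])
  fix s p and e :: real assume "s \<in> T" "p \<in> P" "e > 0"
  moreover have "seminorm p" using sn \<open>p \<in> P\<close> by blast
  ultimately show "\<exists>d>0. \<forall>s'\<in>T. \<bar>s' - s\<bar> < d \<longrightarrow> p (y + f s' - (y + f s)) < e"
    using continuous_map_lcs_topD[OF c] by simp
qed

lemma continuous_map_lcs_top_scaleR_const:
  assumes sn: "\<forall>p\<in>P. seminorm p" and g: "continuous_on T g"
  shows "continuous_map (subtopology euclideanreal T) (lcs_top P) (\<lambda>s. g s *\<^sub>R x)"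
proof (rule continuous_map_lcs_topI[OF sn])
  fix s p and e :: real assume s: "s \<in> T" and p: "p \<in> P" and e: "e > 0"
  have px: "0 \<le> p x" using seminorm_nonneg sn p by blast
  have "e / (p x + 1) > 0" using e px by simp
  then obtain d where "d > 0" and d: "\<forall>s'\<in>T. dist s' s < d \<longrightarrow> dist (g s') (g s) < e / (p x + 1)"
    using g s unfolding continuous_on_iff by blast
  have "p (g s' *\<^sub>R x - g s *\<^sub>R x) < e" if "s' \<in> T" "\<bar>s' - s\<bar> < d" for s'
  proof -
    have "p (g s' *\<^sub>R x - g s *\<^sub>R x) = \<bar>g s' - g s\<bar> * p x"
      using seminorm_scaleR[of p "g s' - g s" x] sn p by (simp add: scaleR_diff_left)
    also have "\<dots> \<le> e / (p x + 1) * p x"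
      using d that px by (intro mult_right_mono) (auto simp: dist_real_def)
    also have "\<dots> < e" using e px by (simp add: field_simps)
    finally show ?thesis .
  qed
  then show "\<exists>d>0. \<forall>s'\<in>T. \<bar>s' - s\<bar> < d \<longrightarrow> p (g s' *\<^sub>R x - g s *\<^sub>R x) < e"
    using \<open>d > 0\<close> by blast
qed

lemma uniformly_continuous_lcs_top:
  assumes c: "continuous_map (subtopology euclideanreal T) (lcs_top P) f"
    and sub: "{a..b} \<subseteq> T" and p: "seminorm p" "p \<in> P" and e: "e > 0"
  shows "\<exists>d>0. \<forall>s\<in>{a..b}. \<forall>s'\<in>{a..b}. \<bar>s - s'\<bar> < d \<longrightarrow> p (f s - f s') < e"
proof -
  have "\<forall>s\<in>{a..b}. \<exists>d>0. \<forall>s'\<in>T. \<bar>s' - s\<bar> < d \<longrightarrow> p (f s' - f s) < e/2"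
    using continuous_map_lcs_topD[OF c p _ half_gt_zero[OF e]] sub by blast
  then obtain \<delta> where \<delta>: "\<And>s. s \<in> {a..b} \<Longrightarrow> \<delta> s > 0 \<and> (\<forall>s'\<in>T. \<bar>s' - s\<bar> < \<delta> s \<longrightarrow> p (f s' - f s) < e/2)"
    by metis
  have "{a..b} \<subseteq> \<Union>((\<lambda>s. ball s (\<delta> s)) ` {a..b})"
    using \<delta> by fastforce
  from Heine_Borel_lemma[OF compact_Icc this] obtain \<epsilon> where "0 < \<epsilon>" and
    leb: "\<And>x. x \<in> {a..b} \<Longrightarrow> \<exists>s0\<in>{a..b}. ball x \<epsilon> \<subseteq> ball s0 (\<delta> s0)"
    by auto
  have "p (f s - f s') < e" if s: "s \<in> {a..b}" "s' \<in> {a..b}" "\<bar>s - s'\<bar> < \<epsilon>" for s s'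
  proof -
    obtain s0 where s0: "s0 \<in> {a..b}" "ball s \<epsilon> \<subseteq> ball s0 (\<delta> s0)" using leb s(1) by blast
    have "s \<in> ball s \<epsilon>" "s' \<in> ball s \<epsilon>" using \<open>0 < \<epsilon>\<close> s(3) by (auto simp: dist_real_def)
    then have "s \<in> ball s0 (\<delta> s0)" "s' \<in> ball s0 (\<delta> s0)" using s0(2) by blast+
    then have "\<bar>s - s0\<bar> < \<delta> s0" "\<bar>s' - s0\<bar> < \<delta> s0"
      by (simp_all add: dist_real_def abs_minus_commute)
    then have "p (f s - f s0) < e/2" "p (f s' - f s0) < e/2" using \<delta>[OF s0(1)] s sub by blast+
    then show ?thesis
      using seminorm_triangle[OF p(1), of "f s" "f s'" "f s0"] seminorm_diff_commute[OF p(1), of "f s0" "f s'"]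
      by linarith
  qed
  then show ?thesis using \<open>0 < \<epsilon>\<close> by blast
qed

lemma bounded_lcs_top:
  assumes c: "continuous_map (subtopology euclideanreal T) (lcs_top P) f"
    and sub: "{a..b} \<subseteq> T" and p: "seminorm p" "p \<in> P"
  obtains M where "M \<ge> 0" "\<And>r. r \<in> {a..b} \<Longrightarrow> p (f r) \<le> M"
proof -
  have "continuous_on {a..b} (\<lambda>r. p (f r))"
    unfolding continuous_on_iff
  proof (intro ballI allI impI)
    fix x and e :: real assume x: "x \<in> {a..b}" and e: "e > 0"
    obtain d where "d > 0" and d: "\<forall>s'\<in>T. \<bar>s' - x\<bar> < d \<longrightarrow> p (f s' - f x) < e"
      using continuous_map_lcs_topD[OF c p _ e, of x] x sub by blast
    have "dist (p (f x')) (p (f x)) < e" if "x' \<in> {a..b}" "dist x' x < d" for x'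
      using d that sub seminorm_triangle[OF p(1), of "f x'" 0 "f x"]
        seminorm_triangle[OF p(1), of "f x" 0 "f x'"] seminorm_diff_commute[OF p(1), of "f x"]
      by (force simp: dist_real_def)
    then show "\<exists>d>0. \<forall>x'\<in>{a..b}. dist x' x < d \<longrightarrow> dist (p (f x')) (p (f x)) < e"
      using \<open>d > 0\<close> by blast
  qed
  then have "compact ((\<lambda>r. p (f r)) ` {a..b})" by (rule compact_continuous_image[OF _ compact_Icc])
  then obtain B where "\<forall>y\<in>(\<lambda>r. p (f r)) ` {a..b}. norm y \<le> B"
    using compact_imp_bounded bounded_iff by metis
  then show thesis by (intro that[of "max B 0"]) (auto simp: abs_le_iff le_max_iff_disj)
qed

lemma closure_of_lcs_topI:
  assumes "limitin (lcs_top P) y x F" "F \<noteq> bot" "eventually (\<lambda>t. y t \<in> S) F"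
  shows "x \<in> (lcs_top P) closure_of S"
  unfolding in_closure_of
proof (intro conjI allI impI)
  fix T assume "x \<in> T \<and> openin (lcs_top P) T"
  then have "eventually (\<lambda>t. y t \<in> S \<and> y t \<in> T) F"
    using assms unfolding limitin_def by (auto intro: eventually_conj)
  then show "\<exists>y. y \<in> S \<and> y \<in> T" using eventually_happens'[OF assms(2)] by blast
qed simp

section \<open>Riemann integrals of vector-valued functions\<close>

abbreviation riemann_sum :: "(real \<times> real set) set \<Rightarrow> (real \<Rightarrow> 'a::real_vector) \<Rightarrow> 'a" where
  "riemann_sum D f \<equiv> (\<Sum>(x,K)\<in>D. content K *\<^sub>R f x)"

lemma riemann_sum_eq: "riemann_sum D f = (\<Sum>i\<in>D. content (snd i) *\<^sub>R f (fst i))"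
  by (rule sum.cong) (auto simp: split_beta)

lemma has_lcs_integralD:
  assumes "has_lcs_integral P f a b I" "p \<in> P" "e > 0"
  obtains d where "d > 0"
    "\<And>D. D tagged_division_of {a..b} \<Longrightarrow> (\<lambda>x. ball x d) fine D \<Longrightarrow> p (riemann_sum D f - I) < e"
  using assms unfolding has_lcs_integral_def by meson

lemma fine_ball_mono: "(\<lambda>x. ball x d) fine D \<Longrightarrow> d \<le> d' \<Longrightarrow> (\<lambda>x. ball x d') fine D"
  unfolding fine_def using subset_ball by fastforce

lemma fine_ball_division_exists:
  assumes "d > 0"
  obtains D where "D tagged_division_of {a..b::real}" "(\<lambda>x. ball x d) fine D"
  using fine_division_exists_real[of "\<lambda>x. ball x d" a b] assms by (auto simp: gauge_ball)

lemma fine_ball_division_sequence: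
  "\<exists>Dk. \<forall>k. Dk k tagged_division_of {a..b::real} \<and> (\<lambda>x. ball x (1 / Suc k)) fine Dk k"
proof -
  have "\<forall>k. \<exists>D. D tagged_division_of {a..b::real} \<and> (\<lambda>x. ball x (1 / Suc k)) fine D"
    using fine_ball_division_exists[of "1 / Suc _" a b] by (metis of_nat_0_less_iff zero_less_Suc
        divide_pos_pos zero_less_one)
  then show ?thesis by (rule choice)
qed

lemma tagged_division_tag_in:
  "D tagged_division_of {a..b} \<Longrightarrow> i \<in> D \<Longrightarrow> fst i \<in> {a..b::real}"
  using tagged_division_ofD(2,3)[of D "{a..b}" "fst i" "snd i"] by auto

lemma has_lcs_integral_unique:
  assumes sc: "sc_lcs P"
    and I: "has_lcs_integral P f a b I" and J: "has_lcs_integral P f a b J"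
  shows "I = J"
proof (rule sc_lcs_eqI[OF sc])
  fix p e assume p: "p \<in> P" and e: "(e::real) > 0"
  obtain d1 where "d1 > 0" and d1: "\<And>D. D tagged_division_of {a..b} \<Longrightarrow>
      (\<lambda>x. ball x d1) fine D \<Longrightarrow> p (riemann_sum D f - I) < e/2"
    using has_lcs_integralD[OF I p half_gt_zero[OF e]] by blast
  obtain d2 where "d2 > 0" and d2: "\<And>D. D tagged_division_of {a..b} \<Longrightarrow>
      (\<lambda>x. ball x d2) fine D \<Longrightarrow> p (riemann_sum D f - J) < e/2"
    using has_lcs_integralD[OF J p half_gt_zero[OF e]] by blast
  obtain D where D: "D tagged_division_of {a..b}" "(\<lambda>x. ball x (min d1 d2)) fine D"
    using fine_ball_division_exists[of "min d1 d2" a b] \<open>d1 > 0\<close> \<open>d2 > 0\<close> by auto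
  have pn: "seminorm p" using sc p by (rule sc_lcs_seminorm)
  have "p (riemann_sum D f - I) < e/2" "p (riemann_sum D f - J) < e/2"
    using d1[OF D(1) fine_ball_mono[OF D(2)]] d2[OF D(1) fine_ball_mono[OF D(2)]] by simp_all
  moreover have "p (I - J) \<le> p (I - riemann_sum D f) + p (riemann_sum D f - J)"
    by (rule seminorm_triangle[OF pn])
  moreover have "p (I - riemann_sum D f) = p (riemann_sum D f - I)" by (rule seminorm_diff_commute[OF pn])
  ultimately show "p (I - J) < e" by linarith
qed

lemma has_lcs_integral_cong:
  assumes "has_lcs_integral P f a b I" "\<And>s. s \<in> {a..b} \<Longrightarrow> f s = g s"
  shows "has_lcs_integral P g a b I"
proof -
  have "riemann_sum D f = riemann_sum D g" if "D tagged_division_of {a..b}" for D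
    using assms(2) tagged_division_tag_in[OF that] by (auto simp: riemann_sum_eq intro: sum.cong)
  then show ?thesis using assms(1) unfolding has_lcs_integral_def by metis
qed

lemma has_lcs_integral_add:
  assumes sn: "\<forall>p\<in>P. seminorm p"
    and I: "has_lcs_integral P f a b I" and J: "has_lcs_integral P g a b J"
  shows "has_lcs_integral P (\<lambda>s. f s + g s) a b (I + J)"
  unfolding has_lcs_integral_def
proof (intro ballI allI impI)
  fix p e assume p: "p \<in> P" and e: "(e::real) > 0"
  obtain d1 where "d1 > 0" and d1: "\<And>D. D tagged_division_of {a..b} \<Longrightarrow>
      (\<lambda>x. ball x d1) fine D \<Longrightarrow> p (riemann_sum D f - I) < e/2"
    using has_lcs_integralD[OF I p half_gt_zero[OF e]] by blast
  obtain d2 where "d2 > 0" and d2: "\<And>D. D tagged_division_of {a..b} \<Longrightarrow>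
      (\<lambda>x. ball x d2) fine D \<Longrightarrow> p (riemann_sum D g - J) < e/2"
    using has_lcs_integralD[OF J p half_gt_zero[OF e]] by blast
  have "p (riemann_sum D (\<lambda>s. f s + g s) - (I + J)) < e"
    if D: "D tagged_division_of {a..b}" "(\<lambda>x. ball x (min d1 d2)) fine D" for D
  proof -
    have eq: "riemann_sum D (\<lambda>s. f s + g s) - (I + J) = (riemann_sum D f - I) + (riemann_sum D g - J)"
      by (simp add: split_beta scaleR_add_right sum.distrib)
    have "p (riemann_sum D f - I) < e/2" "p (riemann_sum D g - J) < e/2"
      using d1[OF D(1) fine_ball_mono[OF D(2)]] d2[OF D(1) fine_ball_mono[OF D(2)]] by simp_all
    moreover have "p ((riemann_sum D f - I) + (riemann_sum D g - J)) \<le>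
        p (riemann_sum D f - I) + p (riemann_sum D g - J)"
      using seminorm_add sn p by blast
    ultimately show ?thesis unfolding eq by linarith
  qed
  then show "\<exists>d>0. \<forall>D. D tagged_division_of {a..b} \<and> (\<lambda>x. ball x d) fine D \<longrightarrow>
      p (riemann_sum D (\<lambda>s. f s + g s) - (I + J)) < e"
    using \<open>d1 > 0\<close> \<open>d2 > 0\<close> by (intro exI[of _ "min d1 d2"]) auto
qed

lemma has_lcs_integral_scaleR:
  assumes sn: "\<forall>p\<in>P. seminorm p" and I: "has_lcs_integral P f a b I"
  shows "has_lcs_integral P (\<lambda>s. c *\<^sub>R f s) a b (c *\<^sub>R I)"
  unfolding has_lcs_integral_def
proof (intro ballI allI impI)
  fix p e assume p: "p \<in> P" and e: "(e::real) > 0"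
  then obtain d where "d > 0" and d: "\<And>D. D tagged_division_of {a..b} \<Longrightarrow>
      (\<lambda>x. ball x d) fine D \<Longrightarrow> p (riemann_sum D f - I) < e / (\<bar>c\<bar> + 1)"
    using has_lcs_integralD[OF I p, of "e / (\<bar>c\<bar> + 1)"] by (metis add_nonneg_pos
        abs_ge_zero divide_pos_pos zero_less_one)
  have "p (riemann_sum D (\<lambda>s. c *\<^sub>R f s) - c *\<^sub>R I) < e"
    if D: "D tagged_division_of {a..b}" "(\<lambda>x. ball x d) fine D" for D
  proof -
    have "riemann_sum D (\<lambda>s. c *\<^sub>R f s) - c *\<^sub>R I = c *\<^sub>R (riemann_sum D f - I)"
      by (simp add: scaleR_sum_right case_prod_unfold scaleR_diff_right mult.commute)
    then have "p (riemann_sum D (\<lambda>s. c *\<^sub>R f s) - c *\<^sub>R I) = \<bar>c\<bar> * p (riemann_sum D f - I)"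
      using seminorm_scaleR[of p c "riemann_sum D f - I"] sn p by simp
    also have "\<dots> \<le> (\<bar>c\<bar> + 1) * p (riemann_sum D f - I)"
      by (intro mult_right_mono) (use seminorm_nonneg sn p in auto)
    also have "\<dots> < e"
      using d[OF D] by (simp add: field_simps add_nonneg_pos)
    finally show ?thesis .
  qed
  then show "\<exists>d>0. \<forall>D. D tagged_division_of {a..b} \<and> (\<lambda>x. ball x d) fine D \<longrightarrow>
      p (riemann_sum D (\<lambda>s. c *\<^sub>R f s) - c *\<^sub>R I) < e"
    using \<open>d > 0\<close> by blast
qed

lemma has_lcs_integral_diff:
  assumes sn: "\<forall>p\<in>P. seminorm p"
    and I: "has_lcs_integral P f a b I" and J: "has_lcs_integral P g a b J"
  shows "has_lcs_integral P (\<lambda>s. f s - g s) a b (I - J)"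
  using has_lcs_integral_add[OF sn I has_lcs_integral_scaleR[OF sn J, of "-1"]] by simp

lemma riemann_sum_bound:
  assumes p: "seminorm p" and D: "D tagged_division_of {a..b}" and "a \<le> b"
    and M: "\<And>s. s \<in> {a..b} \<Longrightarrow> p (f s) \<le> M"
  shows "p (riemann_sum D f) \<le> M * (b - a)"
proof -
  have "p (riemann_sum D f) \<le> (\<Sum>i\<in>D. p (content (snd i) *\<^sub>R f (fst i)))"
    unfolding riemann_sum_eq by (rule seminorm_sum[OF p])
  also have "\<dots> \<le> (\<Sum>i\<in>D. content (snd i) * M)"
    using seminorm_scaleR[OF p] M tagged_division_tag_in[OF D]
    by (intro sum_mono) (simp add: mult_left_mono)
  also have "\<dots> = (\<Sum>i\<in>D. content (snd i)) * M" by (simp add: sum_distrib_right)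
  also have "(\<Sum>i\<in>D. content (snd i)) = b - a"
    using additive_content_tagged_division[OF D[unfolded box_real(2)[symmetric]]] \<open>a \<le> b\<close>
    by (simp add: split_beta)
  finally show ?thesis by (simp add: mult.commute)
qed

lemma has_lcs_integral_bound:
  assumes p: "seminorm p" "p \<in> P" and I: "has_lcs_integral P f a b I" and "a \<le> b"
    and M: "\<And>s. s \<in> {a..b} \<Longrightarrow> p (f s) \<le> M"
  shows "p I \<le> M * (b - a)"
proof (rule field_le_epsilon)
  fix e :: real assume "e > 0"
  then obtain d where "d > 0" and d: "\<And>D. D tagged_division_of {a..b} \<Longrightarrow>
      (\<lambda>x. ball x d) fine D \<Longrightarrow> p (riemann_sum D f - I) < e"
    using has_lcs_integralD[OF I p(2)] by blast
  obtain D where D: "D tagged_division_of {a..b}" "(\<lambda>x. ball x d) fine D"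
    using fine_ball_division_exists[OF \<open>d > 0\<close>] by blast
  have "p (riemann_sum D f) \<le> M * (b - a)" by (rule riemann_sum_bound[OF p(1) D(1) \<open>a \<le> b\<close> M])
  then show "p I \<le> M * (b - a) + e"
    using d[OF D]
      seminorm_triangle[OF p(1), of I 0 "riemann_sum D f"]
      seminorm_diff_commute[OF p(1), of I] by simp
qed

lemma has_lcs_integral_point:
  assumes sn: "\<forall>p\<in>P. seminorm p"
  shows "has_lcs_integral P f a a 0"
  unfolding has_lcs_integral_def
  using riemann_sum_bound[of _ _ a a f] sn by (intro ballI allI impI exI[of _ 1]) fastforce

lemma sum_content_Int_tagged_division:
  fixes a b u v :: real
  assumes D: "D tagged_division_of {a..b}" and uv: "{u..v} \<subseteq> {a..b}"
  shows "(\<Sum>j\<in>D. content ({u..v} \<inter> snd j)) = content {u..v}"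
proof -
  have ind: "(indicat_real {u..v} has_integral content ({u..v} \<inter> {c..d})) {c..d}" for c d :: real
  proof -
    have "((\<lambda>x. 1::real) has_integral content ({max u c..min v d}) *\<^sub>R 1) {max u c..min v d}"
      by (rule has_integral_const_real)
    then have "((\<lambda>x. if x \<in> {u..v} \<inter> {c..d} then 1::real else 0) has_integral
        content ({u..v} \<inter> {c..d})) {c..d}"
      using has_integral_restrict[of "{u..v} \<inter> {c..d}" "{c..d}" "\<lambda>x. 1::real"] by simp
    then show ?thesis by (rule has_integral_eq[rotated]) (auto simp: indicator_def)
  qed
  have "(indicat_real {u..v} has_integral (\<Sum>(x,L)\<in>D. content ({u..v} \<inter> L))) {a..b}"
  proof (rule has_integral_combine_tagged_division[OF D])
    fix x L assume "(x, L) \<in> D"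
    then obtain c d where "L = {c..d}" using tagged_division_ofD(4)[OF D] box_real(2) by metis
    then show "(indicat_real {u..v} has_integral content ({u..v} \<inter> L)) L" using ind by simp
  qed
  moreover have "{u..v} \<inter> {a..b} = {u..v}" using uv by blast
  ultimately show ?thesis
    using ind[of a b] has_integral_unique by (metis (no_types, lifting) split_beta sum.cong)
qed

lemma sum_content_Int_tagged_division':
  fixes a b :: real
  assumes D: "D tagged_division_of {a..b}" and E: "E tagged_division_of {a..b}" and "i \<in> D"
  shows "(\<Sum>j\<in>E. content (snd i \<inter> snd j)) = content (snd i)"
proof -
  obtain u v where "snd i = {u..v}" "{u..v} \<subseteq> {a..b}"
    using tagged_division_ofD(3,4)[OF D, of "fst i" "snd i"] \<open>i \<in> D\<close> by (metis box_real(2) prod.collapse)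
  then show ?thesis using sum_content_Int_tagged_division[OF E] by simp
qed

lemma riemann_sum_common_refinement:
  fixes a b :: real
  assumes D: "D tagged_division_of {a..b}" and E: "E tagged_division_of {a..b}"
  shows "riemann_sum D f = (\<Sum>i\<in>D. \<Sum>j\<in>E. content (snd i \<inter> snd j) *\<^sub>R f (fst i))"
  unfolding riemann_sum_eq
  by (intro sum.cong) (simp_all add: sum_content_Int_tagged_division'[OF D E] scaleR_sum_left[symmetric])

text \<open>On each nonempty cell \<open>K \<inter> L\<close> of the common refinement the two tags are less than \<open>2 d\<close> apart.\<close>

lemma riemann_sums_close:
  fixes a b :: real
  assumes p: "seminorm p" and "a \<le> b"
    and D1: "D1 tagged_division_of {a..b}" "(\<lambda>x. ball x d) fine D1"
    and D2: "D2 tagged_division_of {a..b}" "(\<lambda>x. ball x d) fine D2"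
    and osc: "\<And>s s'. s \<in> {a..b} \<Longrightarrow> s' \<in> {a..b} \<Longrightarrow> \<bar>s - s'\<bar> < 2 * d \<Longrightarrow> p (f s - f s') \<le> \<epsilon>"
  shows "p (riemann_sum D1 f - riemann_sum D2 f) \<le> \<epsilon> * (b - a)"
proof -
  let ?c = "\<lambda>i j. content (snd i \<inter> snd j)"
  have "riemann_sum D2 f = (\<Sum>j\<in>D2. \<Sum>i\<in>D1. ?c i j *\<^sub>R f (fst j))"
    using riemann_sum_common_refinement[OF D2(1) D1(1)] by (simp add: Int_commute)
  then have "riemann_sum D2 f = (\<Sum>i\<in>D1. \<Sum>j\<in>D2. ?c i j *\<^sub>R f (fst j))"
    by (simp only: sum.swap[of _ D2 D1])
  then have diff: "riemann_sum D1 f - riemann_sum D2 f =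
      (\<Sum>i\<in>D1. \<Sum>j\<in>D2. ?c i j *\<^sub>R (f (fst i) - f (fst j)))"
    unfolding riemann_sum_common_refinement[OF D1(1) D2(1)]
    by (simp add: sum_subtractf[symmetric] scaleR_diff_right)
  have piece: "p (?c i j *\<^sub>R (f (fst i) - f (fst j))) \<le> ?c i j * \<epsilon>"
    if i: "i \<in> D1" and j: "j \<in> D2" for i j
  proof (cases "snd i \<inter> snd j = {}")
    case False
    then obtain z where z: "z \<in> snd i" "z \<in> snd j" by blast
    have "snd i \<subseteq> ball (fst i) d" "snd j \<subseteq> ball (fst j) d"
      using D1(2) D2(2) i j by (auto simp: fine_def split_beta)
    with z have "dist (fst i) z < d" "dist (fst j) z < d" by auto
    then have "\<bar>fst i - fst j\<bar> < 2 * d" by (auto simp: dist_real_def abs_less_iff)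
    then have "p (f (fst i) - f (fst j)) \<le> \<epsilon>"
      using osc tagged_division_tag_in[OF D1(1) i] tagged_division_tag_in[OF D2(1) j] by blast
    then show ?thesis
      using seminorm_scaleR[OF p] content_pos_le by (simp add: mult_left_mono)
  qed (simp add: seminorm_zero[OF p])
  have "p (riemann_sum D1 f - riemann_sum D2 f) \<le>
      (\<Sum>i\<in>D1. \<Sum>j\<in>D2. p (?c i j *\<^sub>R (f (fst i) - f (fst j))))"
    unfolding diff by (rule order.trans[OF seminorm_sum[OF p] sum_mono[OF seminorm_sum[OF p]]])
  also have "\<dots> \<le> (\<Sum>i\<in>D1. \<Sum>j\<in>D2. ?c i j * \<epsilon>)"
    by (intro sum_mono piece)
  also have "\<dots> = (\<Sum>i\<in>D1. content (snd i)) * \<epsilon>"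
    by (simp add: sum_distrib_right[symmetric] sum_content_Int_tagged_division'[OF D1(1) D2(1)])
  also have "(\<Sum>i\<in>D1. content (snd i)) = b - a"
    using additive_content_tagged_division[OF D1(1)[unfolded box_real(2)[symmetric]]] \<open>a \<le> b\<close>
    by (simp add: split_beta)
  finally show ?thesis by (simp add: mult.commute)
qed

lemma eventually_inverse_Suc_le:
  assumes "(d::real) > 0"
  shows "eventually (\<lambda>k. 1 / real (Suc k) \<le> d) sequentially"
proof -
  obtain N where "inverse (real (Suc N)) < d" using reals_Archimedean[OF assms] by blast
  moreover have "1 / real (Suc k) \<le> 1 / real (Suc N)" if "k \<ge> N" for k
    using that by (simp add: frac_le)
  ultimately have "1 / real (Suc k) \<le> d" if "k \<ge> N" for k
    using that by (smt (verit) inverse_eq_divide)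
  then show ?thesis unfolding eventually_sequentially by blast
qed

lemma riemann_sums_cauchy:
  fixes a b :: real
  assumes c: "continuous_map (subtopology euclideanreal T) (lcs_top P) f"
    and sub: "{a..b} \<subseteq> T" and "a \<le> b" and p: "seminorm p" "p \<in> P" and "e > 0"
  shows "\<exists>\<delta>>0. \<forall>D1 D2. D1 tagged_division_of {a..b} \<longrightarrow> (\<lambda>x. ball x \<delta>) fine D1 \<longrightarrow>
      D2 tagged_division_of {a..b} \<longrightarrow> (\<lambda>x. ball x \<delta>) fine D2 \<longrightarrow>
      p (riemann_sum D1 f - riemann_sum D2 f) < e"
proof -
  define \<epsilon> where "\<epsilon> = e / (b - a + 1)"
  have "\<epsilon> > 0" and \<epsilon>e: "\<epsilon> * (b - a) < e"
    using \<open>e > 0\<close> \<open>a \<le> b\<close> by (simp_all add: \<epsilon>_def field_simps)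
  then obtain d where "d > 0" and d: "\<forall>s\<in>{a..b}. \<forall>s'\<in>{a..b}. \<bar>s - s'\<bar> < d \<longrightarrow> p (f s - f s') < \<epsilon>"
    using uniformly_continuous_lcs_top[OF c sub p] by blast
  have "p (riemann_sum D1 f - riemann_sum D2 f) < e"
    if D: "D1 tagged_division_of {a..b}" "(\<lambda>x. ball x (d/2)) fine D1"
      "D2 tagged_division_of {a..b}" "(\<lambda>x. ball x (d/2)) fine D2" for D1 D2
  proof -
    have "p (riemann_sum D1 f - riemann_sum D2 f) \<le> \<epsilon> * (b - a)"
    proof (rule riemann_sums_close[OF p(1) \<open>a \<le> b\<close> D])
      fix s s' assume s: "s \<in> {a..b}" "s' \<in> {a..b}" "\<bar>s - s'\<bar> < 2 * (d/2)"
      then have "p (f s - f s') < \<epsilon>" using d by simp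
      then show "p (f s - f s') \<le> \<epsilon>" by simp
    qed
    then show ?thesis using \<epsilon>e by linarith
  qed
  then show ?thesis using \<open>d > 0\<close> by (intro exI[of _ "d/2"]) simp
qed

text \<open>The integral is the limit of the Riemann sums along a sequence of ever finer divisions;
  sequential completeness provides the limit.\<close>

lemma has_lcs_integral_exists:
  fixes a b :: real
  assumes sc: "sc_lcs P"
    and c: "continuous_map (subtopology euclideanreal T) (lcs_top P) f"
    and sub: "{a..b} \<subseteq> T" and "a \<le> b"
  obtains I where "has_lcs_integral P f a b I"
proof -
  have sn: "\<forall>p\<in>P. seminorm p" using sc unfolding sc_lcs_def by blast
  obtain Dk where Dk: "\<And>k. Dk k tagged_division_of {a..b}"
    "\<And>k. (\<lambda>x. ball x (1 / Suc k)) fine Dk k"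
    using fine_ball_division_sequence[of a b] by blast
  have "\<forall>p\<in>P. \<forall>e>0. \<exists>N. \<forall>m\<ge>N. \<forall>k\<ge>N. p (riemann_sum (Dk m) f - riemann_sum (Dk k) f) < e"
  proof (intro ballI allI impI)
    fix p and e :: real assume p: "p \<in> P" and e: "e > 0"
    have "seminorm p" using sn p by blast
    then obtain \<delta> where "\<delta> > 0" and \<delta>: "\<forall>D1 D2. D1 tagged_division_of {a..b} \<longrightarrow>
        (\<lambda>x. ball x \<delta>) fine D1 \<longrightarrow> D2 tagged_division_of {a..b} \<longrightarrow> (\<lambda>x. ball x \<delta>) fine D2 \<longrightarrow>
        p (riemann_sum D1 f - riemann_sum D2 f) < e"
      using riemann_sums_cauchy[OF c sub \<open>a \<le> b\<close> _ p e] by blast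
    obtain N where N: "\<And>k. k \<ge> N \<Longrightarrow> 1 / real (Suc k) \<le> \<delta>"
      using eventually_inverse_Suc_le[OF \<open>\<delta> > 0\<close>] unfolding eventually_sequentially by blast
    show "\<exists>N. \<forall>m\<ge>N. \<forall>k\<ge>N. p (riemann_sum (Dk m) f - riemann_sum (Dk k) f) < e"
    proof (intro exI[of _ N] allI impI)
      fix m k assume "N \<le> m" "N \<le> k"
      show "p (riemann_sum (Dk m) f - riemann_sum (Dk k) f) < e"
        by (rule \<delta>[rule_format, OF Dk(1) fine_ball_mono[OF Dk(2) N[OF \<open>N \<le> m\<close>]]
              Dk(1) fine_ball_mono[OF Dk(2) N[OF \<open>N \<le> k\<close>]]])
    qed
  qed
  moreover have "seq_complete_lcs P" using sc unfolding sc_lcs_def by blast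
  ultimately obtain I where I: "limitin (lcs_top P) (\<lambda>k. riemann_sum (Dk k) f) I sequentially"
    unfolding seq_complete_lcs_def by (auto dest: spec[of _ "\<lambda>k. riemann_sum (Dk k) f"])
  have "has_lcs_integral P f a b I"
    unfolding has_lcs_integral_def
  proof (intro ballI allI impI)
    fix p and e :: real assume p: "p \<in> P" and e: "e > 0"
    have "seminorm p" using sn p by blast
    then obtain \<delta> where "\<delta> > 0" and \<delta>: "\<forall>D1 D2. D1 tagged_division_of {a..b} \<longrightarrow>
        (\<lambda>x. ball x \<delta>) fine D1 \<longrightarrow> D2 tagged_division_of {a..b} \<longrightarrow> (\<lambda>x. ball x \<delta>) fine D2 \<longrightarrow>
        p (riemann_sum D1 f - riemann_sum D2 f) < e/2"
      using riemann_sums_cauchy[OF c sub \<open>a \<le> b\<close> _ p half_gt_zero[OF e]] by blast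
    have "eventually (\<lambda>k. p (riemann_sum (Dk k) f - I) < e/2) sequentially"
      using limitin_lcs_topD[OF I \<open>seminorm p\<close> p half_gt_zero[OF e]] .
    then have "eventually (\<lambda>k. p (riemann_sum (Dk k) f - I) < e/2 \<and> 1 / real (Suc k) \<le> \<delta>) sequentially"
      using eventually_inverse_Suc_le[OF \<open>\<delta> > 0\<close>] by (rule eventually_conj)
    then obtain k where k: "p (riemann_sum (Dk k) f - I) < e/2" "1 / real (Suc k) \<le> \<delta>"
      unfolding eventually_sequentially by blast
    have "p (riemann_sum D f - I) < e"
      if "D tagged_division_of {a..b}" "(\<lambda>x. ball x \<delta>) fine D" for D
    proof -
      have "p (riemann_sum D f - riemann_sum (Dk k) f) < e/2"
        by (rule \<delta>[rule_format, OF that Dk(1) fine_ball_mono[OF Dk(2) k(2)]])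
      moreover have "p (riemann_sum D f - I) \<le>
          p (riemann_sum D f - riemann_sum (Dk k) f) + p (riemann_sum (Dk k) f - I)"
        by (rule seminorm_triangle[OF \<open>seminorm p\<close>])
      ultimately show ?thesis using k(1) by linarith
    qed
    then show "\<exists>d>0. \<forall>D. D tagged_division_of {a..b} \<and> (\<lambda>x. ball x d) fine D \<longrightarrow>
        p (riemann_sum D f - I) < e"
      using \<open>\<delta> > 0\<close> by blast
  qed
  then show thesis by (rule that)
qed

lemma has_lcs_integral_extend_bound:
  fixes a t t' :: real
  assumes p: "seminorm p" "p \<in> P"
    and I: "has_lcs_integral P f a t I" and J: "has_lcs_integral P f a t' J"
    and "a \<le> t" "t \<le> t'" and M: "\<And>s. s \<in> {t..t'} \<Longrightarrow> p (f s) \<le> M"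
  shows "p (J - I) \<le> M * (t' - t)"
proof (rule field_le_epsilon)
  fix e :: real assume e: "e > 0"
  obtain d1 where "d1 > 0" and d1: "\<And>D. D tagged_division_of {a..t} \<Longrightarrow>
      (\<lambda>x. ball x d1) fine D \<Longrightarrow> p (riemann_sum D f - I) < e/2"
    using has_lcs_integralD[OF I p(2) half_gt_zero[OF e]] by blast
  obtain d2 where "d2 > 0" and d2: "\<And>D. D tagged_division_of {a..t'} \<Longrightarrow>
      (\<lambda>x. ball x d2) fine D \<Longrightarrow> p (riemann_sum D f - J) < e/2"
    using has_lcs_integralD[OF J p(2) half_gt_zero[OF e]] by blast
  define \<delta> where "\<delta> = min d1 d2"
  have "\<delta> > 0" using \<open>d1 > 0\<close> \<open>d2 > 0\<close> by (simp add: \<delta>_def)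
  obtain D1 where D1: "D1 tagged_division_of {a..t}" "(\<lambda>x. ball x \<delta>) fine D1"
    using fine_ball_division_exists[OF \<open>\<delta> > 0\<close>] by blast
  obtain D2 where D2: "D2 tagged_division_of {t..t'}" "(\<lambda>x. ball x \<delta>) fine D2"
    using fine_ball_division_exists[OF \<open>\<delta> > 0\<close>] by blast
  have "(D1 \<union> D2) tagged_division_of ({a..t} \<union> {t..t'})"
    by (rule tagged_division_Un[OF D1(1) D2(1)]) auto
  moreover have "{a..t} \<union> {t..t'} = {a..t'}" using \<open>a \<le> t\<close> \<open>t \<le> t'\<close> by auto
  ultimately have DU: "(D1 \<union> D2) tagged_division_of {a..t'}" by simp
  have "content K = 0" if "(x, K) \<in> D1 \<inter> D2" for x K
  proof -
    have K: "(x, K) \<in> D1" "(x, K) \<in> D2" using that by auto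
    obtain u v where "K = cbox u v" using tagged_division_ofD(4)[OF D1(1) K(1)] by blast
    moreover have "K \<subseteq> cbox t t"
      using tagged_division_ofD(3)[OF D1(1) K(1)] tagged_division_ofD(3)[OF D2(1) K(2)] by fastforce
    ultimately have "content K \<le> content (cbox t t)" using content_subset by metis
    then show ?thesis using content_pos_le[of K] by simp
  qed
  then have "riemann_sum (D1 \<inter> D2) f = 0" by (intro sum.neutral) auto
  then have split: "riemann_sum (D1 \<union> D2) f = riemann_sum D1 f + riemann_sum D2 f"
    using sum.union_inter[of D1 D2 "\<lambda>(x, K). content K *\<^sub>R f x"] D1(1) D2(1) by auto
  have "J - I = (riemann_sum D1 f - I) + riemann_sum D2 f - (riemann_sum (D1 \<union> D2) f - J)"
    unfolding split by simp
  then have "p (J - I) \<le> p ((riemann_sum D1 f - I) + riemann_sum D2 f) + p (riemann_sum (D1 \<union> D2) f - J)"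
    by (simp only: seminorm_diff[OF p(1)])
  also have "\<dots> \<le> p (riemann_sum D1 f - I) + p (riemann_sum D2 f) + p (riemann_sum (D1 \<union> D2) f - J)"
    using seminorm_add[OF p(1)] by simp
  finally have "p (J - I) \<le> p (riemann_sum D1 f - I) + p (riemann_sum D2 f) + p (riemann_sum (D1 \<union> D2) f - J)" .
  moreover have "p (riemann_sum D2 f) \<le> M * (t' - t)"
    by (rule riemann_sum_bound[OF p(1) D2(1) \<open>t \<le> t'\<close> M])
  ultimately show "p (J - I) \<le> M * (t' - t) + e"
    using d1[OF D1(1) fine_ball_mono[OF D1(2)]] d2[OF DU fine_ball_mono[OF fine_Un[OF D1(2) D2(2)]]]
    by (simp add: \<delta>_def)
qed

lemma Tint_0: "0 < \<tau> \<Longrightarrow> 0 \<in> Tint \<tau>"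
  by (simp add: Tint_def zero_ereal_def)

lemma Tint_nonneg: "t \<in> Tint \<tau> \<Longrightarrow> 0 \<le> t"
  by (simp add: Tint_def)

lemma atLeastAtMost_subset_Tint: "t \<in> Tint \<tau> \<Longrightarrow> {0..t} \<subseteq> Tint \<tau>"
  by (auto simp: Tint_def intro: le_less_trans[of _ "ereal t"])

lemma Tint_exists_gt:
  assumes "s \<in> Tint \<tau>" obtains b where "b \<in> Tint \<tau>" "s < b"
proof (cases \<tau>)
  case (real r)
  with assms show thesis by (intro that[of "(s + r) / 2"]) (auto simp: Tint_def)
next
  case PInf
  with assms show thesis by (intro that[of "s + 1"]) (auto simp: Tint_def)
qed (use assms in \<open>auto simp: Tint_def\<close>)

text \<open>The indefinite integral is locally Lipschitz, with constant a bound of the integrand.\<close>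

lemma continuous_map_integral_fun:
  assumes sc: "sc_lcs P"
    and c: "continuous_map (subtopology euclideanreal (Tint \<tau>)) (lcs_top P) f"
    and F: "\<And>t. t \<in> Tint \<tau> \<Longrightarrow> has_lcs_integral P f 0 t (F t)"
  shows "continuous_map (subtopology euclideanreal (Tint \<tau>)) (lcs_top P) F"
proof (rule continuous_map_lcs_topI)
  show sn: "\<forall>p\<in>P. seminorm p" using sc unfolding sc_lcs_def by blast
  fix s p and e :: real assume s: "s \<in> Tint \<tau>" and p: "p \<in> P" and e: "e > 0"
  have pn: "seminorm p" using sn p by blast
  obtain b where b: "b \<in> Tint \<tau>" "s < b" using Tint_exists_gt[OF s] by blast
  obtain M where M: "M \<ge> 0" "\<And>r. r \<in> {0..b} \<Longrightarrow> p (f r) \<le> M"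
    using bounded_lcs_top[OF c atLeastAtMost_subset_Tint[OF b(1)] pn p] by blast
  define d where "d = min (b - s) (e / (M + 1))"
  have "d > 0" using b M e by (simp add: d_def)
  have "p (F s' - F s) < e" if s': "s' \<in> Tint \<tau>" "\<bar>s' - s\<bar> < d" for s'
  proof -
    have "s' \<le> b" using s'(2) by (simp add: d_def abs_less_iff)
    have Ms: "p (f r) \<le> M" if "r \<in> {min s s'..max s s'}" for r
      by (intro M(2)) (use that Tint_nonneg[OF s] Tint_nonneg[OF s'(1)] \<open>s' \<le> b\<close> b(2) in
          \<open>auto simp: min_def max_def split: if_splits\<close>)
    have "p (F s' - F s) \<le> M * \<bar>s' - s\<bar>"
    proof (cases "s \<le> s'")
      case True
      have "p (F s' - F s) \<le> M * (s' - s)"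
        by (rule has_lcs_integral_extend_bound[OF pn p F[OF s] F[OF s'(1)] Tint_nonneg[OF s] True])
          (use Ms True in auto)
      then show ?thesis using True by simp
    next
      case False
      have "p (F s - F s') \<le> M * (s - s')"
        by (rule has_lcs_integral_extend_bound[OF pn p F[OF s'(1)] F[OF s] Tint_nonneg[OF s'(1)]])
          (use Ms False in auto)
      then show ?thesis using False seminorm_diff_commute[OF pn, of "F s"] by simp
    qed
    also have "\<dots> \<le> M * (e / (M + 1))"
      using s'(2) M(1) by (intro mult_left_mono) (auto simp: d_def)
    also have "\<dots> < e" using e M(1) by (simp add: field_simps)
    finally show ?thesis .
  qed
  then show "\<exists>d>0. \<forall>s'\<in>Tint \<tau>. \<bar>s' - s\<bar> < d \<longrightarrow> p (F s' - F s) < e"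
    using \<open>d > 0\<close> by blast
qed

lemma has_lcs_integral_scaleR_real:
  fixes g :: "real \<Rightarrow> real"
  assumes sc: "sc_lcs P" and "a \<le> b"
    and g: "continuous_on {a..b} g" and J: "(g has_integral J) {a..b}"
  shows "has_lcs_integral P (\<lambda>s. g s *\<^sub>R x) a b (J *\<^sub>R x)"
proof -
  have sn: "\<forall>p\<in>P. seminorm p" using sc unfolding sc_lcs_def by blast
  obtain I where I: "has_lcs_integral P (\<lambda>s. g s *\<^sub>R x) a b I"
    using has_lcs_integral_exists[OF sc continuous_map_lcs_top_scaleR_const[OF sn g] order_refl \<open>a \<le> b\<close>]
    by blast
  have "I = J *\<^sub>R x"
  proof (rule sc_lcs_eqI[OF sc])
    fix p and e :: real assume p: "p \<in> P" and e: "e > 0"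
    have pn: "seminorm p" using sn p by blast
    define e' where "e' = e / (2 * (p x + 1))"
    have "e' > 0" using e seminorm_nonneg[OF pn, of x] by (simp add: e'_def)
    obtain d where "d > 0" and d: "\<And>D. D tagged_division_of {a..b} \<Longrightarrow>
        (\<lambda>x. ball x d) fine D \<Longrightarrow> p (riemann_sum D (\<lambda>s. g s *\<^sub>R x) - I) < e'"
      using has_lcs_integralD[OF I p \<open>e' > 0\<close>] by blast
    obtain \<gamma> where "gauge \<gamma>" and \<gamma>: "\<And>D. D tagged_division_of {a..b} \<Longrightarrow> \<gamma> fine D \<Longrightarrow>
        \<bar>riemann_sum D g - J\<bar> < e'"
      using J \<open>e' > 0\<close> unfolding has_integral_real by (metis real_norm_def)
    obtain D where D: "D tagged_division_of {a..b}" "(\<lambda>y. ball y d \<inter> \<gamma> y) fine D"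
      using fine_division_exists_real gauge_Int[OF gauge_ball[OF \<open>d > 0\<close>] \<open>gauge \<gamma>\<close>] by blast
    then have fine: "(\<lambda>y. ball y d) fine D" "\<gamma> fine D" by (simp_all add: fine_Int)
    have sum: "riemann_sum D (\<lambda>s. g s *\<^sub>R x) = riemann_sum D g *\<^sub>R x"
      by (simp add: scaleR_sum_left split_beta)
    have "p (I - J *\<^sub>R x) \<le> p (riemann_sum D (\<lambda>s. g s *\<^sub>R x) - I) + \<bar>riemann_sum D g - J\<bar> * p x"
      using seminorm_triangle[OF pn, of I "J *\<^sub>R x" "riemann_sum D (\<lambda>s. g s *\<^sub>R x)"]
        seminorm_diff_commute[OF pn, of I] seminorm_scaleR[OF pn, of "riemann_sum D g - J" x]
      unfolding sum by (simp add: scaleR_diff_left)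
    also have "\<dots> \<le> e' + e' * p x"
      using d[OF D(1) fine(1)] \<gamma>[OF D(1) fine(2)] seminorm_nonneg[OF pn, of x]
      by (intro add_mono mult_right_mono) auto
    also have "\<dots> = e' * (p x + 1)" by (simp add: algebra_simps)
    also have "\<dots> = e / 2" using seminorm_nonneg[OF pn, of x] by (simp add: e'_def field_simps)
    also have "\<dots> < e" using e by simp
    finally show "p (I - J *\<^sub>R x) < e" .
  qed
  then show ?thesis using I by simp
qed

lemma has_lcs_integral_power:
  assumes sc: "sc_lcs P" and "0 \<le> t"
  shows "has_lcs_integral P (\<lambda>s. (s ^ j / fact j) *\<^sub>R x) 0 t ((t ^ Suc j / fact (Suc j)) *\<^sub>R x)"
proof -
  have "((\<lambda>s. s ^ Suc j / fact (Suc j)) has_real_derivative s ^ j / fact j) (at s within {0..t})" for s :: real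
    by (rule derivative_eq_intros refl | simp add: fact_Suc field_simps del: of_nat_Suc)+
  then have "((\<lambda>s. s ^ j / fact j) has_integral t ^ Suc j / fact (Suc j)) {0..t}"
    using fundamental_theorem_of_calculus[OF \<open>0 \<le> t\<close>, of "\<lambda>s. s ^ Suc j / fact (Suc j)"]
    by (simp add: has_real_derivative_iff_has_vector_derivative)
  then show ?thesis
    by (intro has_lcs_integral_scaleR_real[OF sc \<open>0 \<le> t\<close>]) (auto intro!: continuous_intros)
qed

lemma has_lcs_integral_const:
  assumes "sc_lcs P" "0 \<le> t"
  shows "has_lcs_integral P (\<lambda>s. x) 0 t (t *\<^sub>R x)"
  using has_lcs_integral_power[OF assms, of 0 x] by simp

definition indefinite_integral :: "('a::real_vector \<Rightarrow> real) set \<Rightarrow> (real \<Rightarrow> 'a) \<Rightarrow> real \<Rightarrow> 'a" where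
  "indefinite_integral P f t = (SOME I. has_lcs_integral P f 0 t I)"

lemma indefinite_integral_eq:
  assumes sc: "sc_lcs P" and I: "has_lcs_integral P f 0 t I"
  shows "indefinite_integral P f t = I"
proof -
  have "has_lcs_integral P f 0 t (indefinite_integral P f t)"
    unfolding indefinite_integral_def using I by (rule someI)
  then show ?thesis using has_lcs_integral_unique[OF sc] I by blast
qed

lemma has_lcs_integral_indefinite_integral:
  assumes sc: "sc_lcs P"
    and c: "continuous_map (subtopology euclideanreal (Tint \<tau>)) (lcs_top P) f" and t: "t \<in> Tint \<tau>"
  shows "has_lcs_integral P f 0 t (indefinite_integral P f t)"
  using has_lcs_integral_exists[OF sc c atLeastAtMost_subset_Tint[OF t] Tint_nonneg[OF t]]
    indefinite_integral_eq[OF sc] by metis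

lemma continuous_map_indefinite_integral:
  assumes sc: "sc_lcs P" and c: "continuous_map (subtopology euclideanreal (Tint \<tau>)) (lcs_top P) f"
  shows "continuous_map (subtopology euclideanreal (Tint \<tau>)) (lcs_top P) (indefinite_integral P f)"
  using continuous_map_integral_fun[OF sc c has_lcs_integral_indefinite_integral[OF sc c]] .

definition iterated_integral :: "('a::real_vector \<Rightarrow> real) set \<Rightarrow> (real \<Rightarrow> 'a) \<Rightarrow> nat \<Rightarrow> real \<Rightarrow> 'a" where
  "iterated_integral P u j = (indefinite_integral P ^^ j) u"

lemma iterated_integral_0 [simp]: "iterated_integral P u 0 = u"
  by (simp add: iterated_integral_def)

lemma iterated_integral_Suc: "iterated_integral P u (Suc j) = indefinite_integral P (iterated_integral P u j)"
  by (simp add: iterated_integral_def)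

lemma continuous_map_iterated_integral:
  assumes sc: "sc_lcs P" and c: "continuous_map (subtopology euclideanreal (Tint \<tau>)) (lcs_top P) u"
  shows "continuous_map (subtopology euclideanreal (Tint \<tau>)) (lcs_top P) (iterated_integral P u j)"
  by (induction j) (simp_all add: c iterated_integral_Suc continuous_map_indefinite_integral[OF sc])

lemma has_lcs_integral_limitin:
  assumes sn: "\<forall>p\<in>P. seminorm p" and I: "has_lcs_integral P f a b I"
    and Dk: "\<And>k. Dk k tagged_division_of {a..b}" "\<And>k. (\<lambda>x. ball x (1 / Suc k)) fine Dk k"
  shows "limitin (lcs_top P) (\<lambda>k. riemann_sum (Dk k) f) I sequentially"
proof (rule limitin_lcs_topI[OF sn])
  fix p and e :: real assume "p \<in> P" "e > 0"
  then obtain d where "d > 0" and d: "\<And>D. D tagged_division_of {a..b} \<Longrightarrow>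
      (\<lambda>x. ball x d) fine D \<Longrightarrow> p (riemann_sum D f - I) < e"
    using has_lcs_integralD[OF I] by blast
  show "eventually (\<lambda>k. p (riemann_sum (Dk k) f - I) < e) sequentially"
    using eventually_inverse_Suc_le[OF \<open>d > 0\<close>]
  proof eventually_elim
    case (elim k)
    then show ?case using d[OF Dk(1) fine_ball_mono[OF Dk(2)]] by blast
  qed
qed

lemma closed_linear_opD:
  assumes "closed_linear_op P D A"
  shows "subspace D" "\<And>x y. x \<in> D \<Longrightarrow> y \<in> D \<Longrightarrow> A (x + y) = A x + A y"
    "\<And>c x. x \<in> D \<Longrightarrow> A (c *\<^sub>R x) = c *\<^sub>R A x"
    "closedin (prod_topology (lcs_top P) (lcs_top P)) {(x, A x) | x. x \<in> D}"
  using assms unfolding closed_linear_op_def by blast+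

lemma closed_linear_op_zero: "closed_linear_op P D A \<Longrightarrow> 0 \<in> D \<and> A 0 = 0"
  using closed_linear_opD(3)[of P D A 0 0] closed_linear_opD(1)[of P D A] subspace_0 by force

lemma closed_linear_op_sum:
  assumes cl: "closed_linear_op P D A" and v: "\<And>i. i \<in> S \<Longrightarrow> v i \<in> D"
  shows "(\<Sum>i\<in>S. c i *\<^sub>R v i) \<in> D \<and> A (\<Sum>i\<in>S. c i *\<^sub>R v i) = (\<Sum>i\<in>S. c i *\<^sub>R A (v i))"
  using v
proof (induction S rule: infinite_finite_induct)
  case (insert i F)
  have sub: "subspace D" by (rule closed_linear_opD(1)[OF cl])
  have "c i *\<^sub>R v i \<in> D" using sub insert.prems subspace_scale by blast
  then show ?case
    using insert closed_linear_opD(2)[OF cl, of "c i *\<^sub>R v i" "\<Sum>i\<in>F. c i *\<^sub>R v i"]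
      closed_linear_opD(3)[OF cl, of "v i" "c i"] subspace_add[OF sub] by simp
qed (simp_all add: closed_linear_op_zero[OF cl])

text \<open>Riemann sums commute with \<open>A\<close>; pass to the limit along a sequence of ever finer divisions
  and use that the graph of \<open>A\<close> is sequentially closed.\<close>

lemma has_lcs_integral_closed_linear_op:
  assumes sn: "\<forall>p\<in>P. seminorm p" and cl: "closed_linear_op P D A"
    and fD: "\<And>s. s \<in> {a..b} \<Longrightarrow> f s \<in> D"
    and I: "has_lcs_integral P f a b I" and J: "has_lcs_integral P (\<lambda>s. A (f s)) a b J"
  shows "I \<in> D" "A I = J"
proof -
  obtain Dk where Dk: "\<And>k. Dk k tagged_division_of {a..b}" "\<And>k. (\<lambda>x. ball x (1 / Suc k)) fine Dk k"
    using fine_ball_division_sequence[of a b] by blast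
  have graph: "riemann_sum (Dk k) f \<in> D \<and> A (riemann_sum (Dk k) f) = riemann_sum (Dk k) (\<lambda>s. A (f s))"
    for k
    unfolding riemann_sum_eq
    by (rule closed_linear_op_sum[OF cl]) (use fD tagged_division_tag_in[OF Dk(1)] in blast)
  have "limitin (prod_topology (lcs_top P) (lcs_top P))
      (\<lambda>k. (riemann_sum (Dk k) f, A (riemann_sum (Dk k) f))) (I, J) sequentially"
    unfolding limitin_pairwise o_def fst_conv snd_conv graph[THEN conjunct2]
    using has_lcs_integral_limitin[OF sn I Dk] has_lcs_integral_limitin[OF sn J Dk] by simp
  then have "(I, J) \<in> {(x, A x) | x. x \<in> D}"
    by (rule limitin_closedin[OF _ closed_linear_opD(4)[OF cl]]) (use graph in \<open>auto intro: always_eventually\<close>)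
  then show "I \<in> D" "A I = J" by auto
qed

lemma dom_pow_Suc_subset: "dom_pow D A (Suc m) \<subseteq> dom_pow D A m"
  by (induction m) auto

lemma dom_pow_antimono: "k \<le> m \<Longrightarrow> dom_pow D A m \<subseteq> dom_pow D A k"
proof (induction m)
  case (Suc m)
  then show ?case using dom_pow_Suc_subset[of D A m] by (cases "k = Suc m") auto
qed simp

lemma dom_pow_add_scaleR:
  assumes cl: "closed_linear_op P D A" and "x \<in> dom_pow D A m" "y \<in> dom_pow D A m"
  shows "a *\<^sub>R x + b *\<^sub>R y \<in> dom_pow D A m"
  using assms(2,3)
proof (induction m arbitrary: x y)
  case (Suc m)
  have sub: "subspace D" by (rule closed_linear_opD(1)[OF cl])
  then have "a *\<^sub>R x \<in> D" "b *\<^sub>R y \<in> D" using Suc.prems by (auto intro: subspace_scale)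
  then show ?case
    using Suc closed_linear_opD(2,3)[OF cl] subspace_add[OF sub] by auto
qed simp

lemma dom_pow_add:
  "closed_linear_op P D A \<Longrightarrow> x \<in> dom_pow D A m \<Longrightarrow> y \<in> dom_pow D A m \<Longrightarrow> x + y \<in> dom_pow D A m"
  using dom_pow_add_scaleR[of P D A x m y 1 1] by simp

lemma dom_pow_diff:
  "closed_linear_op P D A \<Longrightarrow> x \<in> dom_pow D A m \<Longrightarrow> y \<in> dom_pow D A m \<Longrightarrow> x - y \<in> dom_pow D A m"
  using dom_pow_add_scaleR[of P D A x m y 1 "-1"] by simp

lemma dom_pow_scaleR:
  "closed_linear_op P D A \<Longrightarrow> x \<in> dom_pow D A m \<Longrightarrow> c *\<^sub>R x \<in> dom_pow D A m"
  using dom_pow_add_scaleR[of P D A x m x c 0] by simp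

lemma stationary_denseI:
  assumes "\<And>m x. n \<le> m \<Longrightarrow> x \<in> dom_pow D A m \<Longrightarrow> x \<in> (lcs_top P) closure_of (dom_pow D A (Suc m))"
  shows "stationary_dense P D A \<and> n_index P D A \<le> n"
proof -
  have "n \<in> sd_indices P D A" unfolding sd_indices_def using assms by blast
  then show ?thesis unfolding stationary_dense_def n_index_def by (auto intro: cInf_lower)
qed

section \<open>Asymptotics at \<open>t = 0\<close>\<close>

locale lcs_cauchy_problem =
  fixes P :: "('a::real_vector \<Rightarrow> real) set" and D :: "'a set" and A :: "'a \<Rightarrow> 'a" and \<tau> :: ereal
  assumes sc: "sc_lcs P" and cl: "closed_linear_op P D A" and tau: "0 < \<tau>"
begin

lemma seminorms: "\<forall>p\<in>P. seminorm p"
  using sc unfolding sc_lcs_def by blast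

definition little_o :: "(real \<Rightarrow> 'a) \<Rightarrow> nat \<Rightarrow> bool" where
  "little_o g N \<longleftrightarrow> (\<forall>p\<in>P. \<forall>\<epsilon>>0. \<exists>\<delta>>0. \<forall>s\<in>Tint \<tau>. s < \<delta> \<longrightarrow> p (g s) \<le> \<epsilon> * s ^ N)"

lemma little_oD:
  assumes "little_o g N" "p \<in> P" "\<epsilon> > 0"
  obtains \<delta> where "\<delta> > 0" "\<And>s. s \<in> Tint \<tau> \<Longrightarrow> s < \<delta> \<Longrightarrow> p (g s) \<le> \<epsilon> * s ^ N"
  using assms unfolding little_o_def by meson

lemma little_o_cong: "little_o g N \<Longrightarrow> (\<And>s. s \<in> Tint \<tau> \<Longrightarrow> g s = h s) \<Longrightarrow> little_o h N"
  unfolding little_o_def by metis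

lemma little_o_add:
  assumes g: "little_o g N" and h: "little_o h N"
  shows "little_o (\<lambda>s. g s + h s) N"
  unfolding little_o_def
proof (intro ballI allI impI)
  fix p and \<epsilon> :: real assume p: "p \<in> P" and "\<epsilon> > 0"
  obtain \<delta>1 where "\<delta>1 > 0" and \<delta>1: "\<And>s. s \<in> Tint \<tau> \<Longrightarrow> s < \<delta>1 \<Longrightarrow> p (g s) \<le> \<epsilon>/2 * s ^ N"
    using little_oD[OF g p half_gt_zero[OF \<open>\<epsilon> > 0\<close>]] by blast
  obtain \<delta>2 where "\<delta>2 > 0" and \<delta>2: "\<And>s. s \<in> Tint \<tau> \<Longrightarrow> s < \<delta>2 \<Longrightarrow> p (h s) \<le> \<epsilon>/2 * s ^ N"
    using little_oD[OF h p half_gt_zero[OF \<open>\<epsilon> > 0\<close>]] by blast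
  have "p (g s + h s) \<le> \<epsilon> * s ^ N" if "s \<in> Tint \<tau>" "s < min \<delta>1 \<delta>2" for s
  proof -
    have "p (g s + h s) \<le> p (g s) + p (h s)" using seminorm_add seminorms p by blast
    also have "\<dots> \<le> \<epsilon>/2 * s ^ N + \<epsilon>/2 * s ^ N" using \<delta>1 \<delta>2 that by (intro add_mono) auto
    finally show ?thesis by simp
  qed
  then show "\<exists>\<delta>>0. \<forall>s\<in>Tint \<tau>. s < \<delta> \<longrightarrow> p (g s + h s) \<le> \<epsilon> * s ^ N"
    using \<open>\<delta>1 > 0\<close> \<open>\<delta>2 > 0\<close> by (intro exI[of _ "min \<delta>1 \<delta>2"]) auto
qed

lemma little_o_power:
  assumes "k < n"
  shows "little_o (\<lambda>s. (s ^ n / fact n) *\<^sub>R z) k"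
  unfolding little_o_def
proof (intro ballI allI impI)
  fix p and \<epsilon> :: real assume p: "p \<in> P" and \<epsilon>: "\<epsilon> > 0"
  have pn: "seminorm p" using seminorms p by blast
  have pz: "0 \<le> p z" by (rule seminorm_nonneg[OF pn])
  define \<delta> where "\<delta> = min 1 (\<epsilon> / (p z + 1))"
  have "\<delta> > 0" using \<epsilon> pz by (simp add: \<delta>_def)
  have "p ((s ^ n / fact n) *\<^sub>R z) \<le> \<epsilon> * s ^ k" if s: "s \<in> Tint \<tau>" "s < \<delta>" for s
  proof -
    have "0 \<le> s" "s \<le> 1" "s * p z \<le> \<epsilon>"
      using Tint_nonneg[OF s(1)] s(2) pz \<epsilon> by (auto simp: \<delta>_def field_simps intro: mult_mono)
    have "p ((s ^ n / fact n) *\<^sub>R z) = s ^ n / fact n * p z"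
      using seminorm_scaleR[OF pn] \<open>0 \<le> s\<close> by simp
    also have "\<dots> \<le> s ^ Suc k * p z"
    proof (rule mult_right_mono[OF _ pz])
      have "s ^ n / fact n \<le> s ^ n"
        using \<open>0 \<le> s\<close> by (simp add: divide_le_eq fact_ge_1 mult_le_cancel_left1 order.trans[OF _ fact_ge_1])
      also have "\<dots> \<le> s ^ Suc k" using \<open>0 \<le> s\<close> \<open>s \<le> 1\<close> assms by (intro power_decreasing) auto
      finally show "s ^ n / fact n \<le> s ^ Suc k" .
    qed
    also have "\<dots> = s ^ k * (s * p z)" by simp
    also have "\<dots> \<le> s ^ k * \<epsilon>"
      using \<open>s * p z \<le> \<epsilon>\<close> \<open>0 \<le> s\<close> by (intro mult_left_mono) auto
    finally show ?thesis by (simp add: mult.commute)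
  qed
  then show "\<exists>\<delta>>0. \<forall>s\<in>Tint \<tau>. s < \<delta> \<longrightarrow> p ((s ^ n / fact n) *\<^sub>R z) \<le> \<epsilon> * s ^ k"
    using \<open>\<delta> > 0\<close> by blast
qed

lemma little_o_continuous:
  assumes c: "continuous_map (subtopology euclideanreal (Tint \<tau>)) (lcs_top P) g"
  shows "little_o (\<lambda>s. g s - g 0) 0"
  unfolding little_o_def
proof (intro ballI allI impI)
  fix p and \<epsilon> :: real assume p: "p \<in> P" and "\<epsilon> > 0"
  then obtain \<delta> where "\<delta> > 0" "\<forall>s\<in>Tint \<tau>. \<bar>s - 0\<bar> < \<delta> \<longrightarrow> p (g s - g 0) < \<epsilon>"
    using continuous_map_lcs_topD[OF c _ p Tint_0[OF tau]] seminorms by blast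
  then show "\<exists>\<delta>>0. \<forall>s\<in>Tint \<tau>. s < \<delta> \<longrightarrow> p (g s - g 0) \<le> \<epsilon> * s ^ 0"
    using Tint_nonneg by (intro exI[of _ \<delta>]) fastforce
qed

lemma little_o_integral:
  assumes g: "little_o g N" and G: "\<And>t. t \<in> Tint \<tau> \<Longrightarrow> has_lcs_integral P g 0 t (G t)"
  shows "little_o G (Suc N)"
  unfolding little_o_def
proof (intro ballI allI impI)
  fix p and \<epsilon> :: real assume p: "p \<in> P" and "\<epsilon> > 0"
  then obtain \<delta> where "\<delta> > 0" and \<delta>: "\<And>s. s \<in> Tint \<tau> \<Longrightarrow> s < \<delta> \<Longrightarrow> p (g s) \<le> \<epsilon> * s ^ N"
    using little_oD[OF g] by blast
  have "p (G t) \<le> \<epsilon> * t ^ Suc N" if t: "t \<in> Tint \<tau>" "t < \<delta>" for t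
  proof -
    have "p (G t) \<le> (\<epsilon> * t ^ N) * (t - 0)"
    proof (rule has_lcs_integral_bound[OF _ p G[OF t(1)] Tint_nonneg[OF t(1)]])
      fix s assume s: "s \<in> {0..t}"
      then have "p (g s) \<le> \<epsilon> * s ^ N" using \<delta> atLeastAtMost_subset_Tint[OF t(1)] t(2) by auto
      also have "\<dots> \<le> \<epsilon> * t ^ N" using s \<open>\<epsilon> > 0\<close> by (intro mult_left_mono power_mono) auto
      finally show "p (g s) \<le> \<epsilon> * t ^ N" .
    qed (use seminorms p in blast)
    then show ?thesis by (simp add: algebra_simps)
  qed
  then show "\<exists>\<delta>>0. \<forall>t\<in>Tint \<tau>. t < \<delta> \<longrightarrow> p (G t) \<le> \<epsilon> * t ^ Suc N"
    using \<open>\<delta> > 0\<close> by blast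
qed

lemma limitin_at_right_0:
  assumes small: "little_o (\<lambda>t. K t - (t ^ N / fact N) *\<^sub>R x) N"
  shows "limitin (lcs_top P) (\<lambda>t. (fact N / t ^ N) *\<^sub>R K t) x (at_right 0)"
proof (rule limitin_lcs_topI[OF seminorms])
  fix p and e :: real assume p: "p \<in> P" and e: "e > 0"
  have pn: "seminorm p" using seminorms p by blast
  obtain \<delta> where "\<delta> > 0" and \<delta>: "\<And>t. t \<in> Tint \<tau> \<Longrightarrow> t < \<delta> \<Longrightarrow>
      p (K t - (t ^ N / fact N) *\<^sub>R x) \<le> e / (2 * fact N) * t ^ N"
    using little_oD[OF small p, of "e / (2 * fact N)"] e by auto
  obtain t0 where t0: "t0 \<in> Tint \<tau>" "0 < t0" using Tint_exists_gt[OF Tint_0[OF tau]] by blast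
  have "eventually (\<lambda>t. t \<in> {0<..<min \<delta> t0}) (at_right (0::real))"
    using \<open>\<delta> > 0\<close> t0(2) by (intro eventually_at_right_real) simp
  then show "eventually (\<lambda>t. p ((fact N / t ^ N) *\<^sub>R K t - x) < e) (at_right 0)"
  proof eventually_elim
    case (elim t)
    then have "t > 0" "t ^ N > 0" and t: "t \<in> Tint \<tau>" "t < \<delta>"
      using atLeastAtMost_subset_Tint[OF t0(1)] by auto
    have "(fact N / t ^ N) *\<^sub>R K t - x = (fact N / t ^ N) *\<^sub>R (K t - (t ^ N / fact N) *\<^sub>R x)"
      using \<open>t > 0\<close> by (simp add: scaleR_diff_right)
    then have "p ((fact N / t ^ N) *\<^sub>R K t - x) = fact N / t ^ N * p (K t - (t ^ N / fact N) *\<^sub>R x)"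
      using seminorm_scaleR[OF pn] \<open>t ^ N > 0\<close> by simp
    also have "\<dots> \<le> fact N / t ^ N * (e / (2 * fact N) * t ^ N)"
      using \<delta>[OF t] \<open>t ^ N > 0\<close> by (intro mult_left_mono) auto
    also have "\<dots> < e" using \<open>t ^ N > 0\<close> e by simp
    finally show ?case .
  qed
qed

lemma closure_of_dom_pow_SucI:
  assumes small: "little_o (\<lambda>t. K t - (t ^ N / fact N) *\<^sub>R x) N"
    and K: "\<And>t. t \<in> Tint \<tau> \<Longrightarrow> K t \<in> dom_pow D A (Suc m)"
  shows "x \<in> (lcs_top P) closure_of (dom_pow D A (Suc m))"
proof (rule closure_of_lcs_topI[OF limitin_at_right_0[OF small] trivial_limit_at_right_real])
  obtain t0 where t0: "t0 \<in> Tint \<tau>" "0 < t0" using Tint_exists_gt[OF Tint_0[OF tau]] by blast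
  then have "eventually (\<lambda>t. t \<in> {0<..<t0}) (at_right (0::real))"
    by (intro eventually_at_right_real) simp
  then show "eventually (\<lambda>t. (fact N / t ^ N) *\<^sub>R K t \<in> dom_pow D A (Suc m)) (at_right 0)"
  proof eventually_elim
    case (elim t)
    then have "t \<in> Tint \<tau>" using atLeastAtMost_subset_Tint[OF t0(1)] by auto
    then show ?case by (rule dom_pow_scaleR[OF cl K])
  qed
qed

end

section \<open>Integrated semigroups\<close>

locale lcs_integrated_semigroup = lcs_cauchy_problem +
  fixes n :: nat and S :: "real \<Rightarrow> 'a \<Rightarrow> 'a"
  assumes semigroup: "loc_equicont_int_semigroup P D A \<tau> n S"
begin

lemma continuous_orbit: "continuous_map (subtopology euclideanreal (Tint \<tau>)) (lcs_top P) (\<lambda>t. S t x)"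
  using semigroup unfolding loc_equicont_int_semigroup_def by blast

lemma commute_A: "t \<in> Tint \<tau> \<Longrightarrow> x \<in> D \<Longrightarrow> S t x \<in> D \<and> A (S t x) = S t (A x)"
  using semigroup unfolding loc_equicont_int_semigroup_def by blast

lemma has_lcs_integral_orbit:
  "t \<in> Tint \<tau> \<Longrightarrow> has_lcs_integral P (\<lambda>s. S s x) 0 t (indefinite_integral P (\<lambda>s. S s x) t)"
  by (rule has_lcs_integral_indefinite_integral[OF sc continuous_orbit])

lemma integral_equation:
  assumes "t \<in> Tint \<tau>"
  shows "indefinite_integral P (\<lambda>s. S s x) t \<in> D"
    "A (indefinite_integral P (\<lambda>s. S s x) t) = S t x - (t ^ n / fact n) *\<^sub>R x"
proof -
  obtain I where "has_lcs_integral P (\<lambda>s. S s x) 0 t I" "I \<in> D" "A I = S t x - (t ^ n / fact n) *\<^sub>R x"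
    using semigroup assms unfolding loc_equicont_int_semigroup_def by blast
  then show "indefinite_integral P (\<lambda>s. S s x) t \<in> D"
    "A (indefinite_integral P (\<lambda>s. S s x) t) = S t x - (t ^ n / fact n) *\<^sub>R x"
    using indefinite_integral_eq[OF sc] by simp_all
qed

lemma orbit_0: "S 0 x = (0 ^ n / fact n) *\<^sub>R x"
proof -
  have "indefinite_integral P (\<lambda>s. S s x) 0 = 0"
    by (rule indefinite_integral_eq[OF sc has_lcs_integral_point[OF seminorms]])
  then show ?thesis
    using integral_equation[OF Tint_0[OF tau], of x] closed_linear_op_zero[OF cl] by simp
qed

lemma orbit_eq_integral:
  assumes "z \<in> D" "t \<in> Tint \<tau>"
  shows "S t z - (t ^ n / fact n) *\<^sub>R z = indefinite_integral P (\<lambda>s. S s (A z)) t"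
proof -
  have orbit: "S s z \<in> D \<and> A (S s z) = S s (A z)" if "s \<in> {0..t}" for s
    using commute_A assms atLeastAtMost_subset_Tint[OF assms(2)] that by blast
  have "A (indefinite_integral P (\<lambda>s. S s z) t) = indefinite_integral P (\<lambda>s. S s (A z)) t"
    by (rule has_lcs_integral_closed_linear_op[OF seminorms cl _ has_lcs_integral_orbit[OF assms(2)]
          has_lcs_integral_cong[OF has_lcs_integral_orbit[OF assms(2)]]]) (use orbit in auto)
  then show ?thesis using integral_equation(2)[OF assms(2)] by simp
qed

text \<open>Induction on \<open>k\<close>, writing \<open>S(s) z = (s\<^sup>n / n!) z + \<integral>\<^sub>0\<^sup>s S(r) A z dr\<close>.\<close>

lemma little_o_orbit: "k < n \<Longrightarrow> z \<in> dom_pow D A k \<Longrightarrow> little_o (\<lambda>s. S s z) k"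
proof (induction k arbitrary: z)
  case 0
  then show ?case using little_o_continuous[OF continuous_orbit, of z] orbit_0[of z] by (simp add: power_0_left)
next
  case (Suc k)
  then have "little_o (\<lambda>s. S s (A z)) k" by simp
  then have "little_o (indefinite_integral P (\<lambda>s. S s (A z))) (Suc k)"
    by (rule little_o_integral[OF _ has_lcs_integral_orbit])
  then have "little_o (\<lambda>s. indefinite_integral P (\<lambda>s. S s (A z)) s + (s ^ n / fact n) *\<^sub>R z) (Suc k)"
    using little_o_power[OF Suc.prems(1)] by (rule little_o_add)
  then show ?case
    by (rule little_o_cong) (use orbit_eq_integral Suc.prems(2) in \<open>auto simp: algebra_simps\<close>)
qed

lemma little_o_orbit_diff:
  assumes "x \<in> dom_pow D A n"
  shows "little_o (\<lambda>s. S s x - (s ^ n / fact n) *\<^sub>R x) n"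
proof (cases n)
  case 0
  then show ?thesis using little_o_continuous[OF continuous_orbit, of x] orbit_0[of x] by simp
next
  case (Suc k)
  with assms have "little_o (\<lambda>s. S s (A x)) k" by (intro little_o_orbit) auto
  then have "little_o (indefinite_integral P (\<lambda>s. S s (A x))) (Suc k)"
    by (rule little_o_integral[OF _ has_lcs_integral_orbit])
  then have integral: "little_o (indefinite_integral P (\<lambda>s. S s (A x))) n" using Suc by simp
  have xD: "x \<in> D" using assms Suc by simp
  from integral show ?thesis by (rule little_o_cong) (simp add: orbit_eq_integral[OF xD])
qed

lemma orbit_dom_pow: "x \<in> dom_pow D A m \<Longrightarrow> t \<in> Tint \<tau> \<Longrightarrow> S t x \<in> dom_pow D A m"
  by (induction m arbitrary: x) (auto simp: commute_A)

lemma in_closure_of_dom_pow_Suc: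
  assumes "n \<le> m" "x \<in> dom_pow D A m"
  shows "x \<in> (lcs_top P) closure_of (dom_pow D A (Suc m))"
proof (rule closure_of_dom_pow_SucI)
  let ?K = "indefinite_integral P (\<lambda>s. S s x)"
  show "?K t \<in> dom_pow D A (Suc m)" if "t \<in> Tint \<tau>" for t
    using integral_equation[OF that] dom_pow_diff[OF cl orbit_dom_pow[OF assms(2) that]
        dom_pow_scaleR[OF cl assms(2)]] by simp
  have "x \<in> dom_pow D A n" by (rule subsetD[OF dom_pow_antimono[OF assms(1)] assms(2)])
  moreover have "has_lcs_integral P (\<lambda>s. S s x - (s ^ n / fact n) *\<^sub>R x) 0 t
      (?K t - (t ^ Suc n / fact (Suc n)) *\<^sub>R x)" if "t \<in> Tint \<tau>" for t
    by (rule has_lcs_integral_diff[OF seminorms has_lcs_integral_orbit[OF that]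
          has_lcs_integral_power[OF sc Tint_nonneg[OF that]]])
  ultimately show "little_o (\<lambda>t. ?K t - (t ^ Suc n / fact (Suc n)) *\<^sub>R x) (Suc n)"
    by (intro little_o_integral[OF little_o_orbit_diff])
qed

lemma stationary_dense: "stationary_dense P D A \<and> n_index P D A \<le> n"
  using in_closure_of_dom_pow_Suc by (rule stationary_denseI)

end

section \<open>Mild solutions\<close>

context lcs_cauchy_problem
begin

lemma mild_solution_continuous:
  "mild_solution P D A \<tau> x u \<Longrightarrow> continuous_map (subtopology euclideanreal (Tint \<tau>)) (lcs_top P) u"
  unfolding mild_solution_def by blast

lemma mild_solution_integral:
  assumes u: "mild_solution P D A \<tau> x u" and t: "t \<in> Tint \<tau>"
  shows "indefinite_integral P u t \<in> D" "A (indefinite_integral P u t) = u t - x"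
proof -
  obtain I where "has_lcs_integral P u 0 t I" "I \<in> D" "A I = u t - x"
    using u t unfolding mild_solution_def by blast
  then show "indefinite_integral P u t \<in> D" "A (indefinite_integral P u t) = u t - x"
    using indefinite_integral_eq[OF sc] by simp_all
qed

lemma mild_solution_0:
  assumes "mild_solution P D A \<tau> x u"
  shows "u 0 = x"
proof -
  have "indefinite_integral P u 0 = 0"
    by (rule indefinite_integral_eq[OF sc has_lcs_integral_point[OF seminorms]])
  then show ?thesis
    using mild_solution_integral[OF assms Tint_0[OF tau]] closed_linear_op_zero[OF cl] by simp
qed

lemma mild_solution_shift:
  assumes x: "x \<in> D" and v: "mild_solution P D A \<tau> (A x) v"
  shows "mild_solution P D A \<tau> x (\<lambda>t. x + indefinite_integral P v t)"
  unfolding mild_solution_def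
proof (intro conjI ballI)
  let ?F = "indefinite_integral P v"
  have cv: "continuous_map (subtopology euclideanreal (Tint \<tau>)) (lcs_top P) v"
    by (rule mild_solution_continuous[OF v])
  have cF: "continuous_map (subtopology euclideanreal (Tint \<tau>)) (lcs_top P) ?F"
    by (rule continuous_map_indefinite_integral[OF sc cv])
  then show "continuous_map (subtopology euclideanreal (Tint \<tau>)) (lcs_top P) (\<lambda>t. x + ?F t)"
    by (rule continuous_map_lcs_top_add_const[OF seminorms])
  fix t assume t: "t \<in> Tint \<tau>"
  have F: "?F s \<in> D \<and> A (?F s) = v s - A x" if "s \<in> {0..t}" for s
    using mild_solution_integral[OF v] atLeastAtMost_subset_Tint[OF t] that by blast
  let ?G = "indefinite_integral P ?F t"
  have G: "has_lcs_integral P ?F 0 t ?G"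
    by (rule has_lcs_integral_indefinite_integral[OF sc cF t])
  have "has_lcs_integral P (\<lambda>s. v s - A x) 0 t (?F t - t *\<^sub>R A x)"
    by (rule has_lcs_integral_diff[OF seminorms has_lcs_integral_indefinite_integral[OF sc cv t]
          has_lcs_integral_const[OF sc Tint_nonneg[OF t]]])
  then have "has_lcs_integral P (\<lambda>s. A (?F s)) 0 t (?F t - t *\<^sub>R A x)"
    by (rule has_lcs_integral_cong) (use F in simp)
  then have GD: "?G \<in> D" "A ?G = ?F t - t *\<^sub>R A x"
    using has_lcs_integral_closed_linear_op[OF seminorms cl _ G] F by blast+
  have tx: "t *\<^sub>R x \<in> D" using subspace_scale[OF closed_linear_opD(1)[OF cl] x] .
  have "has_lcs_integral P (\<lambda>s. x + ?F s) 0 t (t *\<^sub>R x + ?G)"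
    by (rule has_lcs_integral_add[OF seminorms has_lcs_integral_const[OF sc Tint_nonneg[OF t]] G])
  moreover have "t *\<^sub>R x + ?G \<in> D" using subspace_add[OF closed_linear_opD(1)[OF cl] tx GD(1)] .
  moreover have "A (t *\<^sub>R x + ?G) = x + ?F t - x"
    using closed_linear_opD(2)[OF cl tx GD(1)] closed_linear_opD(3)[OF cl x] GD(2) by simp
  ultimately show "\<exists>I. has_lcs_integral P (\<lambda>t. x + ?F t) 0 t I \<and> I \<in> D \<and> A I = x + ?F t - x"
    by blast
qed

lemma iterated_integral_mild_solution:
  assumes u: "mild_solution P D A \<tau> x u" and t: "t \<in> Tint \<tau>"
  shows "iterated_integral P u (Suc j) t \<in> D \<and>
    A (iterated_integral P u (Suc j) t) = iterated_integral P u j t - (t ^ j / fact j) *\<^sub>R x"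
  using t
proof (induction j arbitrary: t)
  case 0
  then show ?case using mild_solution_integral[OF u] by (simp add: iterated_integral_Suc)
next
  case (Suc j)
  let ?I = "iterated_integral P u"
  have c: "continuous_map (subtopology euclideanreal (Tint \<tau>)) (lcs_top P) (?I j)" for j
    by (rule continuous_map_iterated_integral[OF sc mild_solution_continuous[OF u]])
  have int: "has_lcs_integral P (?I j) 0 t (?I (Suc j) t)" if "t \<in> Tint \<tau>" for j t
    unfolding iterated_integral_Suc by (rule has_lcs_integral_indefinite_integral[OF sc c that])
  have IH: "?I (Suc j) s \<in> D \<and> A (?I (Suc j) s) = ?I j s - (s ^ j / fact j) *\<^sub>R x" if "s \<in> {0..t}" for s
    using Suc.IH atLeastAtMost_subset_Tint[OF Suc.prems] that by blast
  have "has_lcs_integral P (\<lambda>s. ?I j s - (s ^ j / fact j) *\<^sub>R x) 0 t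
      (?I (Suc j) t - (t ^ Suc j / fact (Suc j)) *\<^sub>R x)"
    by (rule has_lcs_integral_diff[OF seminorms int[OF Suc.prems] has_lcs_integral_power[OF sc
          Tint_nonneg[OF Suc.prems]]])
  then have "has_lcs_integral P (\<lambda>s. A (?I (Suc j) s)) 0 t (?I (Suc j) t - (t ^ Suc j / fact (Suc j)) *\<^sub>R x)"
    by (rule has_lcs_integral_cong) (use IH in simp)
  then show ?case
    using has_lcs_integral_closed_linear_op[OF seminorms cl _ int[OF Suc.prems]] IH by blast
qed

lemma little_o_iterated_integral:
  assumes u: "mild_solution P D A \<tau> x u"
  shows "little_o (\<lambda>t. iterated_integral P u j t - (t ^ j / fact j) *\<^sub>R x) j"
proof (induction j)
  case 0
  then show ?case
    using little_o_continuous[OF mild_solution_continuous[OF u]] mild_solution_0[OF u] by simp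
next
  case (Suc j)
  have c: "continuous_map (subtopology euclideanreal (Tint \<tau>)) (lcs_top P) (iterated_integral P u j)"
    by (rule continuous_map_iterated_integral[OF sc mild_solution_continuous[OF u]])
  show ?case
    by (rule little_o_integral[OF Suc.IH has_lcs_integral_diff[OF seminorms
          has_lcs_integral_indefinite_integral[OF sc c] has_lcs_integral_power[OF sc Tint_nonneg]],
          folded iterated_integral_Suc])
qed

lemma iterated_integral_dom_pow:
  assumes u: "mild_solution P D A \<tau> x u" and uk: "\<And>t. t \<in> Tint \<tau> \<Longrightarrow> u t \<in> dom_pow D A k"
    and x: "x \<in> dom_pow D A (k + j)" and t: "t \<in> Tint \<tau>"
  shows "iterated_integral P u (Suc j) t \<in> dom_pow D A (Suc (k + j))"
  using x t
proof (induction j arbitrary: t)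
  case 0
  then show ?case
    using iterated_integral_mild_solution[OF u, of t 0] dom_pow_diff[OF cl uk] by simp
next
  case (Suc j)
  have "x \<in> dom_pow D A (k + j)"
    using subsetD[OF dom_pow_antimono[of "k + j" "k + Suc j"] Suc.prems(1)] by simp
  then have "iterated_integral P u (Suc j) t \<in> dom_pow D A (k + Suc j)"
    using Suc.IH Suc.prems(2) by simp
  then have "iterated_integral P u (Suc j) t - (t ^ Suc j / fact (Suc j)) *\<^sub>R x \<in> dom_pow D A (k + Suc j)"
    by (rule dom_pow_diff[OF cl _ dom_pow_scaleR[OF cl Suc.prems(1)]])
  then show ?case using iterated_integral_mild_solution[OF u Suc.prems(2), of "Suc j"] by simp
qed

end

locale lcs_unique_mild_solutions = lcs_cauchy_problem +
  fixes n :: nat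
  assumes unique: "\<forall>x\<in>dom_pow D A n. unique_mild_solution P D A \<tau> x"
begin

definition solution :: "'a \<Rightarrow> real \<Rightarrow> 'a" where
  "solution x = (SOME u. mild_solution P D A \<tau> x u \<and>
     (\<forall>v. mild_solution P D A \<tau> x v \<longrightarrow> (\<forall>t\<in>Tint \<tau>. v t = u t)))"

lemma solution:
  assumes "x \<in> dom_pow D A n"
  shows "mild_solution P D A \<tau> x (solution x)"
    "\<And>v t. mild_solution P D A \<tau> x v \<Longrightarrow> t \<in> Tint \<tau> \<Longrightarrow> v t = solution x t"
proof -
  have "\<exists>u. mild_solution P D A \<tau> x u \<and> (\<forall>v. mild_solution P D A \<tau> x v \<longrightarrow> (\<forall>t\<in>Tint \<tau>. v t = u t))"
    using unique assms unfolding unique_mild_solution_def by blast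
  from someI_ex[OF this, folded solution_def]
  show "mild_solution P D A \<tau> x (solution x)"
    "\<And>v t. mild_solution P D A \<tau> x v \<Longrightarrow> t \<in> Tint \<tau> \<Longrightarrow> v t = solution x t"
    by blast+
qed

text \<open>By uniqueness \<open>u(t; x) = x + \<integral>\<^sub>0\<^sup>t u(s; A x) ds\<close>, whose \<open>A\<close>-image is \<open>u(t; A x) - A x\<close>.\<close>

lemma solution_dom_pow: "x \<in> dom_pow D A (n + k) \<Longrightarrow> t \<in> Tint \<tau> \<Longrightarrow> solution x t \<in> dom_pow D A k"
proof (induction k arbitrary: x t)
  case (Suc k)
  have xD: "x \<in> D" and Ax: "A x \<in> dom_pow D A (n + k)" using Suc.prems by auto
  have xn: "x \<in> dom_pow D A n" and Axn: "A x \<in> dom_pow D A n"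
    using subsetD[OF dom_pow_antimono[OF le_add1] Suc.prems(1)]
      subsetD[OF dom_pow_antimono[OF le_add1] Ax] by simp_all
  let ?v = "solution (A x)"
  have v: "mild_solution P D A \<tau> (A x) ?v" by (rule solution(1)[OF Axn])
  have F: "indefinite_integral P ?v t \<in> D" "A (indefinite_integral P ?v t) = ?v t - A x"
    using mild_solution_integral[OF v Suc.prems(2)] by blast+
  have "A (indefinite_integral P ?v t) \<in> dom_pow D A k"
    unfolding F(2)
    by (rule dom_pow_diff[OF cl Suc.IH[OF Ax Suc.prems(2)] subsetD[OF dom_pow_antimono[OF le_add2] Ax]])
  then have "indefinite_integral P ?v t \<in> dom_pow D A (Suc k)" using F(1) by simp
  then have "x + indefinite_integral P ?v t \<in> dom_pow D A (Suc k)"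
    by (rule dom_pow_add[OF cl subsetD[OF dom_pow_antimono[OF le_add2] Suc.prems(1)]])
  then show ?case
    using solution(2)[OF xn mild_solution_shift[OF xD v] Suc.prems(2)] by simp
qed simp

lemma in_closure_of_dom_pow_Suc:
  assumes "n \<le> m" "x \<in> dom_pow D A m"
  shows "x \<in> (lcs_top P) closure_of (dom_pow D A (Suc m))"
proof -
  have xn: "x \<in> dom_pow D A (n + (m - n))" using assms by simp
  let ?u = "solution x"
  have u: "mild_solution P D A \<tau> x ?u" by (rule solution(1)[OF subsetD[OF dom_pow_antimono[OF le_add1] xn]])
  show ?thesis
  proof (rule closure_of_dom_pow_SucI[OF little_o_iterated_integral[OF u, of "Suc n"]])
    fix t assume "t \<in> Tint \<tau>"
    then show "iterated_integral P ?u (Suc n) t \<in> dom_pow D A (Suc m)"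
      using iterated_integral_dom_pow[OF u solution_dom_pow[OF xn], of n t] assms by simp
  qed
qed

lemma stationary_dense: "stationary_dense P D A \<and> n_index P D A \<le> n"
  using in_closure_of_dom_pow_Suc by (rule stationary_denseI)

end

theorem proposition2p3:
  fixes P :: "('a::real_vector \<Rightarrow> real) set"
    and D :: "'a set" and A :: "'a \<Rightarrow> 'a"
    and \<tau> :: ereal and n :: nat
  assumes "sc_lcs P"
    and "closed_linear_op P D A"
    and "0 < \<tau>"
  shows "((\<forall>x\<in>dom_pow D A n. unique_mild_solution P D A \<tau> x)
            \<longrightarrow> stationary_dense P D A \<and> n_index P D A \<le> n)
       \<and> ((\<exists>S. loc_equicont_int_semigroup P D A \<tau> n S)
            \<longrightarrow> stationary_dense P D A \<and> n_index P D A \<le> n)"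
proof (rule conjI; rule impI)
  assume "\<forall>x\<in>dom_pow D A n. unique_mild_solution P D A \<tau> x"
  then interpret lcs_unique_mild_solutions P D A \<tau> n
    using assms by unfold_locales
  show "stationary_dense P D A \<and> n_index P D A \<le> n" by (rule stationary_dense)
next
  assume "\<exists>S. loc_equicont_int_semigroup P D A \<tau> n S"
  then obtain S where "loc_equicont_int_semigroup P D A \<tau> n S" by blast
  then interpret lcs_integrated_semigroup P D A \<tau> n S
    using assms by unfold_locales
  show "stationary_dense P D A \<and> n_index P D A \<le> n" by (rule stationary_dense)
qed

end
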